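(* Let $2\le n\le+\infty$ and let $\{a_i\}_{i=1}^n$ be a non-increasing $n$-tuple of positive numbers with $\sum_{i=1}^n a_i\le1$ and $\sum_{i=1}^n\eta(a_i)<+\infty$. Let $I_n=\mathbb{N}\cap[1,n]$, $d_k=\sum_{i=k+1}^n a_i$, $s_k=\sum_{i=k+1}^n\eta(a_i)$ for $k\in\{0\}\cup I_{n-1}$, $b_k=s_{k-1}+d_{k-1}\ln a_k$ for $k\in I_n$ (so $b_n=0$ if $n<\infty$). Define $z_0(0)=n$ and, for $b>0$, $$z_0(b)=\sum_{k=1}^{n-1}\mathbf{1}_{B'_k}(b)\left(k+d_ke^{\frac{s_k-b}{d_k}}\right),\quad B'_1=[b_2,+\infty),\ B'_k=[b_{k+1},b_k)\ (k\in I_{n-1}\setminus\{1\}).$$ For $b>0$ let $\bar{x}^b=\{x^b_i\}_{i=1}^n$ be the unique minimizer of $\sum_{i=1}^n e^{-bx_i}$ over the set of nondecreasing $n$-tuples $\{x_i\}$ of reals with $x_1=0$ and $\sum_{i=1}^n a_ix_i=1$ (so that $z_0(b)$ is the minimum value). Let $\theta>0$, $f(b)=\theta b+\ln z_0(b)$, and $$m=1\ \text{if}\ \theta<1/d_0,\qquad m=\max\{k\in I_{n-1}:\ d_k+ka_k\ge1/\theta\}\ \text{if}\ \theta\ge1/d_0.$$ (i) If $n<+\infty$: $f$ is positive, convex and continuously differentiable on $[0,+\infty)$; $f(0)=\ln n$, $f'(0^+)=\theta-\frac{1}{a_nn}$ and $\lim_{b\to+\infty}f(b)=+\infty$; and $\inf_{b\in[0,+\infty)}f(b)=f(b_*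 )$, where $b_*$ is the unique point of $[0,+\infty)$ at which the infimum is attained, given by: in case $A$ ($a_nn\ge1/\theta$), $b_*=0$ and $f(b_* )=\ln n$; in case $B$ ($a_nn<1/\theta$), $b_*=s_m+d_m\ln\frac{1-\theta d_m}{\theta m}$ and $f(b_* )=b_*\theta+\ln\frac{m}{1-d_m\theta}$. In case $A$, $\lim_{b\to0^+}x^b_i=0$ for $1\le i\le\tilde m$ and $\lim_{b\to0^+}x^b_i=\frac{1}{a_n(n-\tilde m)}$ for $\tilde m<i\le n$, where $\tilde m=n-\max\{k\in\mathbb{N}\cap[1,n-1]:a_{n-k+1}=a_n\}$. In case $B$, $x^{b_*}_i=0$ for $1\le i\le m$ and $x^{b_*}_i=\frac{1}{b_*}\ln\frac{1-\theta d_m}{a_i\theta m}$ for $m<i\le n$. (ii) If $n=+\infty$: $f$ is positive, convex and continuously differentiable on $(0,+\infty)$; $\lim_{b\to0^+}f(b)=+\infty$, $\lim_{b\to0^+}f'(b)=-\infty$, $\lim_{b\to+\infty}f(b)=+\infty$; $\inf_{b\in(0,+\infty)}f(b)=f(b_* )$ with $b_*=s_m+d_m\ln\frac{1-\theta d_m}{\theta m}$ the unique point of $[0,+\infty)$ where the infimum is attained (with $f(0)=+\infty$), and $$f(b_* )=\theta s_m+\eta(1-\theta d_m)+(1-\theta d_m)\ln m+d_m\eta(\theta).$$ Moreover $x^{b_*}_i=0$ for $1\le i\le m$, $x^{b_*}_i=\frac{1}{b_*}\ln\frac{1-\theta d_m}{a_i\theta m}$ for $i>m$, and $$\sum_{i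=1}^{+\infty}x^{b_*}_ie^{-b_*x^{b_*}_i}=\theta\sum_{i=1}^{+\infty}e^{-b_*x^{b_*}_i}.$$
   Context: $\eta(x)=-x\ln x$ for $x>0$, $\eta(0)=0$. An $n$-tuple with $n=+\infty$ means a sequence. $\mathbf{1}_B$ is the indicator function of $B$; $f'(0^+)$ is the right derivative at $0$. *)

theory Defs
  imports "HOL-Analysis.Analysis" "HOL-Library.Extended_Nat"
begin

definition eta :: "real \<Rightarrow> real" where
  "eta x = (if x > 0 then - x * ln x else 0)"

definition Idx :: "enat \<Rightarrow> nat set" where
  "Idx n = {i. 1 \<le> i \<and> enat i \<le> n}"

definition dd :: "enat \<Rightarrow> (nat \<Rightarrow> real) \<Rightarrow> nat \<Rightarrow> real" where
  "dd n a k = infsum a {i \<in> Idx n. k < i}"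

definition ss :: "enat \<Rightarrow> (nat \<Rightarrow> real) \<Rightarrow> nat \<Rightarrow> real" where
  "ss n a k = infsum (\<lambda>i. eta (a i)) {i \<in> Idx n. k < i}"

definition bb :: "enat \<Rightarrow> (nat \<Rightarrow> real) \<Rightarrow> nat \<Rightarrow> real" where
  "bb n a k = ss n a (k - 1) + dd n a (k - 1) * ln (a k)"

definition Bp :: "enat \<Rightarrow> (nat \<Rightarrow> real) \<Rightarrow> nat \<Rightarrow> real set" where
  "Bp n a k = (if k = 1 then {bb n a 2..} else {bb n a (k + 1)..<bb n a k})"

text \<open>z_0; z_0(0) = n (only meaningful for finite n).\<close>
definition z0 :: "enat \<Rightarrow> (nat \<Rightarrow> real) \<Rightarrow> real \<Rightarrow> real" where
  "z0 n a b = (if b = 0 then real (the_enat n)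
     else infsum (\<lambda>k. indicator (Bp n a k) b *
                       (real k + dd n a k * exp ((ss n a k - b) / dd n a k)))
                 {k. 1 \<le> k \<and> enat (k + 1) \<le> n})"

definition feasible :: "enat \<Rightarrow> (nat \<Rightarrow> real) \<Rightarrow> (nat \<Rightarrow> real) \<Rightarrow> bool" where
  "feasible n a x \<longleftrightarrow>
     (\<forall>i. i \<notin> Idx n \<longrightarrow> x i = 0) \<and>
     (\<forall>i\<in>Idx n. \<forall>j\<in>Idx n. i \<le> j \<longrightarrow> x i \<le> x j) \<and>
     x 1 = 0 \<and>
     (\<lambda>i. a i * x i) summable_on Idx n \<and> infsum (\<lambda>i. a i * x i) (Idx n) = 1"

text \<open>x minimizes sum e^{-b x_i} over feasible tuples (a non-summable sum is +infinity).\<close>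
definition is_minimizer :: "enat \<Rightarrow> (nat \<Rightarrow> real) \<Rightarrow> real \<Rightarrow> (nat \<Rightarrow> real) \<Rightarrow> bool" where
  "is_minimizer n a b x \<longleftrightarrow>
     feasible n a x \<and> (\<lambda>i. exp (- b * x i)) summable_on Idx n \<and>
     (\<forall>y. feasible n a y \<and> (\<lambda>i. exp (- b * y i)) summable_on Idx n \<longrightarrow>
          infsum (\<lambda>i. exp (- b * x i)) (Idx n) \<le> infsum (\<lambda>i. exp (- b * y i)) (Idx n))"

definition xb :: "enat \<Rightarrow> (nat \<Rightarrow> real) \<Rightarrow> real \<Rightarrow> nat \<Rightarrow> real" where
  "xb n a b = (THE x. is_minimizer n a b x)"

definition ff :: "enat \<Rightarrow> (nat \<Rightarrow> real) \<Rightarrow> real \<Rightarrow> real \<Rightarrow> real" where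
  "ff n a \<theta> b = \<theta> * b + ln (z0 n a b)"

definition mm :: "enat \<Rightarrow> (nat \<Rightarrow> real) \<Rightarrow> real \<Rightarrow> nat" where
  "mm n a \<theta> = (if \<theta> < 1 / dd n a 0 then 1
     else Max {k. 1 \<le> k \<and> enat (k + 1) \<le> n \<and> dd n a k + real k * a k \<ge> 1 / \<theta>})"

end

theory Submission
  imports Defs
begin

text \<open>
  Fix a multiplier \<open>E > 0\<close> and put \<open>x\<^sub>1 = 0\<close>, \<open>exp (- b x\<^sub>i) = min 1 (E a\<^sub>i)\<close> for \<open>i \<ge> 2\<close>.
  This tuple meets the constraint \<open>\<Sum> a\<^sub>i x\<^sub>i = 1\<close> exactly when \<open>b = budget E\<close>, and since the
  Lagrangian \<open>exp (- b y\<^sub>i) + E b a\<^sub>i y\<^sub>i\<close> is minimised termwise by \<open>x\<^sub>i\<close> over \<open>y\<^sub>i \<ge> 0\<close>,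
  it is the unique minimiser, with value \<open>zval E\<close>. The budget is strictly decreasing in
  \<open>E\<close>, so each admissible \<open>b\<close> has a unique multiplier \<open>mult b\<close> and \<open>z\<^sub>0 b = zval (mult b)\<close>;
  on the piece \<open>B'\<^sub>k\<close> the multiplier is \<open>exp ((s\<^sub>k - b) / d\<^sub>k)\<close>, which is where the
  formula for \<open>z\<^sub>0\<close> comes from.

  A supporting-line inequality for the curve \<open>E \<mapsto> (budget E, zval E)\<close> gives
  \<open>z\<^sub>0' b = - mult b\<close>, hence \<open>f' b = \<theta> - mult b / zval (mult b)\<close>, which is strictly
  increasing in \<open>b\<close>. So \<open>f\<close> is convex with a unique minimiser: the zero of \<open>f'\<close>, whose
  multiplier is \<open>\<theta> m / (1 - \<theta> d\<^sub>m)\<close> for the paper's index \<open>m\<close>, or else \<open>b = 0\<close>.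
\<close>

lemma infsum_diff:
  fixes f g :: "'a \<Rightarrow> 'b::{topological_ab_group_add, t2_space}"
  assumes "f summable_on A" "g summable_on A"
  shows "infsum (\<lambda>x. f x - g x) A = infsum f A - infsum g A"
  using infsum_add[OF assms(1) summable_on_uminus[THEN iffD2, OF assms(2)]]
  by (simp add: infsum_uminus)

lemma summable_on_diff:
  fixes f g :: "'a \<Rightarrow> 'b::topological_ab_group_add"
  assumes "f summable_on A" "g summable_on A"
  shows "(\<lambda>x. f x - g x) summable_on A"
  using summable_on_add[OF assms(1) summable_on_uminus[THEN iffD2, OF assms(2)]] by simp

lemma infsum_tail_tendsto_0:
  fixes f :: "nat \<Rightarrow> real"
  assumes sf: "f summable_on A" and nn: "\<And>i. i \<in> A \<Longrightarrow> 0 \<le> f i"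
  shows "(\<lambda>k. infsum f {i\<in>A. k < i}) \<longlonglongrightarrow> 0"
proof (rule LIMSEQ_I)
  fix r :: real assume r: "0 < r"
  obtain F where F: "finite F" "F \<subseteq> A" "dist (sum f F) (infsum f A) \<le> r / 2"
    using infsum_finite_approximation[OF sf, of "r / 2"] r by auto
  define K where "K = Max (insert 0 F)"
  have FK: "i \<le> K" if "i \<in> F" for i using F that by (auto simp: K_def)
  show "\<exists>no. \<forall>k\<ge>no. norm (infsum f {i\<in>A. k < i} - 0) < r"
  proof (intro exI allI impI)
    fix k assume k: "K \<le> k"
    have s1: "f summable_on {i\<in>A. i \<le> k}" "f summable_on {i\<in>A. k < i}"
      using sf by (auto intro: summable_on_subset_banach)
    have "infsum f A = infsum f ({i\<in>A. i \<le> k} \<union> {i\<in>A. k < i})"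
      by (rule arg_cong[where f = "infsum f"]) auto
    also have "\<dots> = infsum f {i\<in>A. i \<le> k} + infsum f {i\<in>A. k < i}"
      using s1 by (intro infsum_Un_disjoint) auto
    finally have split: "infsum f A = infsum f {i\<in>A. i \<le> k} + infsum f {i\<in>A. k < i}" .
    have "F \<subseteq> {i\<in>A. i \<le> k}" using F(2) FK k le_trans by blast
    then have "sum f F \<le> infsum f {i\<in>A. i \<le> k}"
      using F(1) nn s1 by (intro finite_sum_le_infsum) auto
    moreover have "0 \<le> infsum f {i\<in>A. k < i}" using nn by (intro infsum_nonneg) auto
    ultimately show "norm (infsum f {i\<in>A. k < i} - 0) < r"
      using split F(3) r by (auto simp: dist_real_def)
  qed
qed

lemma exp_minus_ge_tangent:
  fixes p u :: real
  assumes "0 < p"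
  shows "p - p * (u + ln p) \<le> exp (- u)"
    and "exp (- u) = p - p * (u + ln p) \<Longrightarrow> u = - ln p"
proof -
  have e: "exp (- u) = p * exp (- (u + ln p))"
    using assms by (simp add: exp_diff exp_minus field_simps)
  show "p - p * (u + ln p) \<le> exp (- u)"
    using mult_left_mono[OF exp_minus_ge[of "u + ln p"], of p] assms e
    by (simp add: algebra_simps)
  assume "exp (- u) = p - p * (u + ln p)"
  then have "p * exp (- (u + ln p)) = p * (1 - (u + ln p))"
    using e by (simp add: algebra_simps)
  then have "\<not> 1 - (u + ln p) < exp (- (u + ln p))"
    using assms by simp
  then show "u = - ln p"
    using exp_minus_greater[of "u + ln p"] by simp
qed

lemma exp_minus_ge_one_minus_mult:
  fixes c u :: real
  assumes "0 \<le> u" "1 \<le> c"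
  shows "1 - c * u \<le> exp (- u)"
    and "exp (- u) = 1 - c * u \<Longrightarrow> u = 0"
proof -
  have "u \<le> c * u" using assms mult_right_mono[of 1 c u] by simp
  then show "1 - c * u \<le> exp (- u)" using exp_minus_ge[of u] by linarith
  assume "exp (- u) = 1 - c * u"
  then have "\<not> 1 - u < exp (- u)" using \<open>u \<le> c * u\<close> by linarith
  then show "u = 0" using exp_minus_greater by blast
qed

text \<open>Since \<open>min 1 q = exp (- max 0 (- ln q))\<close>, this is the tangent-line inequality of
  \<open>exp (- u)\<close> on \<open>u \<ge> 0\<close> at the point \<open>max 0 (- ln p)\<close>, with slope \<open>- p\<close>.\<close>
lemma min_one_ln_tangent:
  fixes p q :: real
  assumes p: "0 < p" and q: "0 < q"
  shows "min 1 p - p * (max 0 (- ln q) - max 0 (- ln p)) \<le> min 1 q"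
proof -
  define u where "u = max 0 (- ln q)"
  have u: "0 \<le> u" "min 1 q = exp (- u)"
    using q by (auto simp: u_def min_def max_def)
  show ?thesis
  proof (cases "p \<le> 1")
    case True
    then show ?thesis
      using exp_minus_ge_tangent(1)[OF p, of u] u p by (simp add: u_def algebra_simps)
  next
    case False
    then show ?thesis
      using exp_minus_ge_one_minus_mult(1)[OF u(1), of p] u by (simp add: u_def)
  qed
qed

section \<open>Calculus on real intervals\<close>

lemma is_interval_atLeastAtMost_subset:
  fixes D :: "real set"
  assumes "is_interval D" "x \<in> D" "y \<in> D"
  shows "{x..y} \<subseteq> D"
proof
  fix z assume "z \<in> {x..y}"
  then show "z \<in> D" using mem_is_interval_1_I[OF assms] by simp
qed

lemma is_interval_open_segment_subset_interior:
  fixes D :: "real set"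
  assumes "is_interval D" "x \<in> D" "y \<in> D"
  shows "{x<..<y} \<subseteq> interior D"
proof -
  have "interior {x..y} \<subseteq> interior D"
    using is_interval_atLeastAtMost_subset[OF assms] by (rule interior_mono)
  then show ?thesis by simp
qed

lemma MVT_interval:
  fixes f f' :: "real \<Rightarrow> real"
  assumes D: "is_interval D" and c: "continuous_on D f"
    and dv: "\<And>x. x \<in> interior D \<Longrightarrow> (f has_real_derivative f' x) (at x)"
    and xy: "x \<in> D" "y \<in> D" "x < y"
  obtains z where "x < z" "z < y" "f y - f x = (y - x) * f' z"
proof -
  have sub: "{x..y} \<subseteq> D" using is_interval_atLeastAtMost_subset[OF D xy(1,2)] .
  have int: "{x<..<y} \<subseteq> interior D"
    using is_interval_open_segment_subset_interior[OF D xy(1,2)] .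
  have "continuous_on {x..y} f" using c sub continuous_on_subset by blast
  moreover have "f differentiable (at z)" if "x < z" "z < y" for z
  proof -
    have "z \<in> interior D" using int that by auto
    then show ?thesis using dv real_differentiable_def by blast
  qed
  ultimately obtain l z where lz: "x < z" "z < y" "DERIV f z :> l" "f y - f x = (y - x) * l"
    using MVT[OF xy(3)] by blast
  moreover have "z \<in> interior D" using int lz by auto
  then have "l = f' z" using DERIV_unique lz(3) dv by blast
  ultimately show ?thesis using that by blast
qed

lemma convex_on_interval_mono_deriv:
  fixes f f' :: "real \<Rightarrow> real"
  assumes D: "is_interval D" and c: "continuous_on D f"
    and dv: "\<And>x. x \<in> interior D \<Longrightarrow> (f has_real_derivative f' x) (at x)"
    and mono: "\<And>x y. x \<in> interior D \<Longrightarrow> y \<in> interior D \<Longrightarrow> x \<le> y \<Longrightarrow> f' x \<le> f' y"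
  shows "convex_on D f"
proof (rule convex_on_linorderI)
  show "convex D" using D by (rule is_interval_convex)
  fix t x y :: real
  assume t: "t > 0" "t < 1" and xy: "x \<in> D" "y \<in> D" "x < y"
  define z where "z = (1 - t) * x + t * y"
  have zx: "z - x = t * (y - x)" by (simp add: z_def algebra_simps)
  have yz: "y - z = (1 - t) * (y - x)" by (simp add: z_def algebra_simps)
  have "0 < t * (y - x)" "0 < (1 - t) * (y - x)" using t xy by simp_all
  then have xz: "x < z" "z < y" unfolding zx[symmetric] yz[symmetric] by simp_all
  then have zD: "z \<in> D" using is_interval_atLeastAtMost_subset[OF D xy(1,2)] by auto
  have int: "{x<..<y} \<subseteq> interior D" using is_interval_open_segment_subset_interior[OF D xy(1,2)] .
  obtain \<xi> where \<xi>: "x < \<xi>" "\<xi> < z" "f z - f x = (z - x) * f' \<xi>"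
    using MVT_interval[OF D c dv xy(1) zD xz(1)] by blast
  obtain \<zeta> where \<zeta>: "z < \<zeta>" "\<zeta> < y" "f y - f z = (y - z) * f' \<zeta>"
    using MVT_interval[OF D c dv zD xy(2) xz(2)] by blast
  have "f' \<xi> \<le> f' \<zeta>" using \<xi> \<zeta> int by (intro mono) auto
  have "(f z - f x) * (1 - t) * (y - x) = (f z - f x) * (y - z)" using yz by simp
  also have "\<dots> \<le> (f y - f z) * (z - x)"
    using \<open>f' \<xi> \<le> f' \<zeta>\<close> \<xi>(3) \<zeta>(3) xz by (simp add: mult_left_mono)
  also have "\<dots> = (f y - f z) * t * (y - x)" using zx by simp
  finally have "(f z - f x) * (1 - t) \<le> (f y - f z) * t"
    using xy by (simp add: mult_le_cancel_right)
  then show "f ((1 - t) *\<^sub>R x + t *\<^sub>R y) \<le> (1 - t) * f x + t * f y"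
    by (simp add: z_def algebra_simps)
qed

lemma strict_min_by_deriv_sign:
  fixes f f' :: "real \<Rightarrow> real"
  assumes D: "is_interval D" and c: "continuous_on D f"
    and dv: "\<And>x. x \<in> interior D \<Longrightarrow> (f has_real_derivative f' x) (at x)"
    and x0: "x0 \<in> D"
    and up: "\<And>x. x \<in> interior D \<Longrightarrow> x0 < x \<Longrightarrow> 0 < f' x"
    and down: "\<And>x. x \<in> interior D \<Longrightarrow> x < x0 \<Longrightarrow> f' x < 0"
    and b: "b \<in> D" "b \<noteq> x0"
  shows "f x0 < f b"
proof (cases "x0 < b")
  case True
  obtain z where z: "x0 < z" "z < b" "f b - f x0 = (b - x0) * f' z"
    using MVT_interval[OF D c dv x0 b(1) True] .
  then have "z \<in> interior D"
    using is_interval_open_segment_subset_interior[OF D x0 b(1)] by auto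
  then have "0 < (b - x0) * f' z" using True z up[of z] by simp
  then show ?thesis using z by simp
next
  case False
  then have lt: "b < x0" using b by simp
  obtain z where z: "b < z" "z < x0" "f x0 - f b = (x0 - b) * f' z"
    using MVT_interval[OF D c dv b(1) x0 lt] .
  then have "z \<in> interior D"
    using is_interval_open_segment_subset_interior[OF D b(1) x0] by auto
  then have "(x0 - b) * f' z < 0" using lt z down[of z] by (simp add: mult_pos_neg)
  then show ?thesis using z by simp
qed

lemma Idx_iff: "i \<in> Idx n \<longleftrightarrow> 1 \<le> i \<and> enat i \<le> n"
  by (simp add: Idx_def)

locale decreasing_weights =
  fixes n :: enat and a :: "nat \<Rightarrow> real"
  assumes n2: "2 \<le> n"
    and apos: "\<forall>i\<in>Idx n. 0 < a i"
    and amono: "\<forall>i\<in>Idx n. \<forall>j\<in>Idx n. i \<le> j \<longrightarrow> a j \<le> a i"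
    and asum: "a summable_on Idx n" and asum1: "infsum a (Idx n) \<le> 1"
    and eta_sum: "(\<lambda>i. eta (a i)) summable_on Idx n"
begin

abbreviation "I \<equiv> Idx n"
abbreviation "d \<equiv> dd n a"
abbreviation "s \<equiv> ss n a"

definition "J = {i \<in> I. 2 \<le> i}"
definition "tail k = {i \<in> I. k < i}"
definition "crit k = d k + real k * a k"

lemma I_down: "i \<in> I \<Longrightarrow> 1 \<le> j \<Longrightarrow> j \<le> i \<Longrightarrow> j \<in> I"
  by (auto simp: Idx_iff intro: order_trans[of "enat j" "enat i"])

lemma two_I: "2 \<in> I"
  using n2 by (simp add: Idx_iff numeral_eq_enat)

lemma one_I: "1 \<in> I" and two_J: "2 \<in> J"
  using I_down[OF two_I, of 1] two_I by (auto simp: J_def)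

lemma J_sub: "J \<subseteq> I" and tail_sub: "tail k \<subseteq> I"
  by (auto simp: J_def tail_def)

lemma d_eq: "d k = infsum a (tail k)" and s_eq: "s k = infsum (\<lambda>i. eta (a i)) (tail k)"
  by (simp_all add: dd_def ss_def tail_def)

lemma I_mono: "i \<in> I \<Longrightarrow> j \<in> I \<Longrightarrow> i \<le> j \<Longrightarrow> a j \<le> a i"
  using amono by blast

lemma summable_a: "A \<subseteq> I \<Longrightarrow> a summable_on A"
  using asum summable_on_subset_banach by blast

lemma summable_eta: "A \<subseteq> I \<Longrightarrow> (\<lambda>i. eta (a i)) summable_on A"
  using eta_sum summable_on_subset_banach by blast

lemma a_le1: "i \<in> I \<Longrightarrow> a i \<le> 1"
proof -
  assume i: "i \<in> I"
  have "sum a {i} \<le> infsum a I"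
    using i apos by (intro finite_sum_le_infsum asum) auto
  then show ?thesis using asum1 by simp
qed

lemma eta_a: "i \<in> I \<Longrightarrow> eta (a i) = - a i * ln (a i)"
  using apos by (simp add: eta_def)

lemma eta_a_nonneg: "i \<in> I \<Longrightarrow> 0 \<le> eta (a i)"
  using eta_a a_le1 apos by (simp add: mult_nonneg_nonpos less_imp_le)

lemma d_nonneg: "0 \<le> d k"
  unfolding d_eq using apos tail_sub by (intro infsum_nonneg) (auto simp: less_imp_le subset_iff)

lemma tail_Suc: "Suc k \<in> I \<Longrightarrow> tail k = insert (Suc k) (tail (Suc k))"
  by (auto simp: tail_def)

lemma d_Suc: "Suc k \<in> I \<Longrightarrow> d k = a (Suc k) + d (Suc k)"
  unfolding d_eq by (subst tail_Suc) (auto intro!: infsum_insert summable_a tail_sub simp: tail_def)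

lemma s_Suc: "Suc k \<in> I \<Longrightarrow> s k = eta (a (Suc k)) + s (Suc k)"
  unfolding s_eq by (subst tail_Suc) (auto intro!: infsum_insert summable_eta tail_sub simp: tail_def)

lemma d_pos: "Suc k \<in> I \<Longrightarrow> 0 < d k"
  using d_Suc[of k] d_nonneg[of "Suc k"] apos by fastforce

section \<open>Multipliers\<close>

definition budget :: "real \<Rightarrow> real" where
  "budget E = infsum (\<lambda>i. a i * max 0 (- ln (E * a i))) J"

definition zval :: "real \<Rightarrow> real" where
  "zval E = 1 + infsum (\<lambda>i. min 1 (E * a i)) J"

definition zratio :: "real \<Rightarrow> real" where
  "zratio E = 1 / E + infsum (\<lambda>i. min (1 / E) (a i)) J"

definition splits_at :: "nat \<Rightarrow> real \<Rightarrow> bool" where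
  "splits_at k E \<longleftrightarrow> (\<forall>i\<in>I. 2 \<le> i \<and> i \<le> k \<longrightarrow> 1 \<le> E * a i) \<and> (\<forall>i\<in>I. k < i \<longrightarrow> E * a i \<le> 1)"

lemma summable_budget_terms:
  assumes "0 < E" "A \<subseteq> I"
  shows "(\<lambda>i. a i * max 0 (- ln (E * a i))) summable_on A"
proof (rule summable_on_comparison_test)
  show "(\<lambda>i. \<bar>ln E\<bar> * a i + eta (a i)) summable_on A"
    using assms by (intro summable_on_add summable_on_cmult_right summable_a summable_eta)
  fix i assume "i \<in> A"
  then have iI: "i \<in> I" and ai: "0 < a i" using assms apos by auto
  have "- ln (E * a i) = - ln E - ln (a i)" using ai assms by (simp add: ln_mult)
  moreover have "ln (a i) \<le> 0" using a_le1[OF iI] ai by simp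
  ultimately have "max 0 (- ln (E * a i)) \<le> \<bar>ln E\<bar> - ln (a i)" by auto
  then have "a i * max 0 (- ln (E * a i)) \<le> a i * (\<bar>ln E\<bar> - ln (a i))"
    using ai by (intro mult_left_mono) auto
  then show "a i * max 0 (- ln (E * a i)) \<le> \<bar>ln E\<bar> * a i + eta (a i)"
    using eta_a[OF iI] by (simp add: algebra_simps)
  show "0 \<le> a i * max 0 (- ln (E * a i))" using ai by simp
qed

lemma summable_zval_terms:
  assumes "0 < E" "A \<subseteq> I"
  shows "(\<lambda>i. min 1 (E * a i)) summable_on A"
proof (rule summable_on_comparison_test)
  show "(\<lambda>i. E * a i) summable_on A"
    using assms by (intro summable_on_cmult_right summable_a)
  fix i assume "i \<in> A"
  then have "0 < E * a i" using apos assms by auto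
  then show "min 1 (E * a i) \<le> E * a i" "0 \<le> min 1 (E * a i)" by simp_all
qed

lemma summable_zratio_terms:
  assumes "0 < E" "A \<subseteq> I"
  shows "(\<lambda>i. min (1 / E) (a i)) summable_on A"
proof (rule summable_on_comparison_test)
  show "a summable_on A" using assms(2) by (rule summable_a)
  fix i assume "i \<in> A"
  then have "0 < a i" using apos assms by auto
  then show "min (1 / E) (a i) \<le> a i" "0 \<le> min (1 / E) (a i)" using assms(1) by simp_all
qed

lemma J_split:
  assumes "1 \<le> k" "k \<in> I"
  shows "J = {2..k} \<union> tail k" "{2..k} \<inter> tail k = {}" "{2..k} \<subseteq> I"
  using assms I_down[OF assms(2)] by (auto simp: J_def tail_def)

lemma budget_split_at:
  assumes k: "1 \<le> k" "k \<in> I" and E: "0 < E" and sp: "splits_at k E"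
  shows "budget E = s k - d k * ln E"
proof -
  let ?t = "\<lambda>i. a i * max 0 (- ln (E * a i))"
  have "budget E = infsum ?t {2..k} + infsum ?t (tail k)"
    unfolding budget_def J_split(1)[OF k] using J_split(2,3)[OF k] E tail_sub
    by (intro infsum_Un_disjoint summable_budget_terms)
  also have "infsum ?t {2..k} = 0"
    using sp J_split(3)[OF k] by (intro infsum_0) (auto simp: splits_at_def)
  also have "infsum ?t (tail k) = infsum (\<lambda>i. eta (a i) - ln E * a i) (tail k)"
  proof (rule infsum_cong)
    fix i assume i: "i \<in> tail k"
    then have iI: "i \<in> I" and ai: "0 < a i" using apos tail_sub by auto
    have "E * a i \<le> 1" using sp i by (auto simp: splits_at_def tail_def)
    then have "ln (E * a i) \<le> 0" using E ai by simp
    then have "?t i = a i * (- ln E - ln (a i))"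
      using E ai by (simp add: ln_mult)
    then show "?t i = eta (a i) - ln E * a i" using eta_a[OF iI] by (simp add: algebra_simps)
  qed
  also have "\<dots> = s k - ln E * d k"
    unfolding s_eq d_eq using tail_sub
    by (subst infsum_diff) (auto intro!: summable_eta summable_on_cmult_right summable_a infsum_cmult_right)
  finally show ?thesis by simp
qed

lemma zval_split_at:
  assumes k: "1 \<le> k" "k \<in> I" and E: "0 < E" and sp: "splits_at k E"
  shows "zval E = k + E * d k"
proof -
  let ?t = "\<lambda>i. min 1 (E * a i)"
  have "zval E = 1 + (infsum ?t {2..k} + infsum ?t (tail k))"
    unfolding zval_def J_split(1)[OF k] using J_split(2,3)[OF k] E tail_sub
    by (subst infsum_Un_disjoint) (auto intro!: summable_zval_terms)
  also have "infsum ?t {2..k} = infsum (\<lambda>_. 1) {2..k}"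
    using sp J_split(3)[OF k] by (intro infsum_cong) (auto simp: splits_at_def)
  also have "infsum ?t (tail k) = infsum (\<lambda>i. E * a i) (tail k)"
    using sp by (intro infsum_cong) (auto simp: splits_at_def tail_def)
  also have "\<dots> = E * d k"
    unfolding d_eq by (rule infsum_cmult_right) (rule summable_a[OF tail_sub])
  finally show ?thesis using k by simp
qed

lemma splits_at_inverse:
  assumes "1 \<le> k" "k \<in> I"
  shows "splits_at k (1 / a k)"
  using assms I_mono[OF _ assms(2)] I_mono[OF assms(2)] apos
  by (auto simp: splits_at_def field_simps)

lemma budget_term_anti:
  fixes x E E' :: real
  assumes "0 < E" "E \<le> E'" "0 < x"
  shows "x * max 0 (- ln (E' * x)) \<le> x * max 0 (- ln (E * x))"
proof -
  have "ln (E * x) \<le> ln (E' * x)" using assms by (simp add: mult_right_mono)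
  then have "max 0 (- ln (E' * x)) \<le> max 0 (- ln (E * x))" by simp
  then show ?thesis using assms by (simp add: mult_left_mono)
qed

lemma budget_term_strict_anti:
  fixes x E E' :: real
  assumes "0 < E" "E < E'" "0 < x" "E * x < 1"
  shows "x * max 0 (- ln (E' * x)) < x * max 0 (- ln (E * x))"
proof -
  have "ln (E * x) < ln (E' * x)" "ln (E * x) < 0" using assms by auto
  then show ?thesis using assms by (intro mult_strict_left_mono) auto
qed

lemma budget_nonneg: "0 \<le> budget E"
  unfolding budget_def using apos J_sub by (intro infsum_nonneg) (force intro: mult_nonneg_nonneg)

lemma budget_anti:
  assumes "0 < E" "E \<le> E'"
  shows "budget E' \<le> budget E"
  unfolding budget_def using assms J_sub apos
  by (intro infsum_mono summable_budget_terms budget_term_anti) auto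

lemma budget_strict_anti:
  assumes E: "0 < E" "E < E'" and j: "j \<in> J" "E * a j < 1"
  shows "budget E' < budget E"
  unfolding budget_def
proof (rule has_sum_strict_mono[OF has_sum_infsum has_sum_infsum])
  show "(\<lambda>i. a i * max 0 (- ln (E' * a i))) summable_on J"
    "(\<lambda>i. a i * max 0 (- ln (E * a i))) summable_on J"
    using E J_sub by (auto intro!: summable_budget_terms)
  show "\<And>i. i \<in> J \<Longrightarrow> a i * max 0 (- ln (E' * a i)) \<le> a i * max 0 (- ln (E * a i))"
    using E J_sub apos by (intro budget_term_anti) auto
  show "a j * max 0 (- ln (E' * a j)) < a j * max 0 (- ln (E * a j))"
    using E j J_sub apos by (intro budget_term_strict_anti) auto
qed (use j in auto)

lemma budget_pos_witness:
  assumes "0 < budget E"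
  obtains j where "j \<in> J" "E * a j < 1"
proof -
  have "\<not> (\<forall>j\<in>J. 1 \<le> E * a j)"
  proof
    assume "\<forall>j\<in>J. 1 \<le> E * a j"
    then have "budget E = 0" unfolding budget_def by (intro infsum_0) auto
    then show False using assms by simp
  qed
  then show ?thesis using that by (auto simp: not_le)
qed

lemma budget_inj:
  assumes "0 < E1" "0 < E2" "budget E1 = budget E2" "0 < budget E1"
  shows "E1 = E2"
proof (rule ccontr)
  assume "E1 \<noteq> E2"
  then consider "E1 < E2" | "E2 < E1" by linarith
  then show False
  proof cases
    case 1
    obtain j where "j \<in> J" "E1 * a j < 1" using budget_pos_witness assms by blast
    then show False using budget_strict_anti 1 assms by fastforce
  next
    case 2
    obtain j where "j \<in> J" "E2 * a j < 1" using budget_pos_witness assms by auto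
    then show False using budget_strict_anti 2 assms by fastforce
  qed
qed

lemma zval_mono:
  assumes "0 < E" "E \<le> E'"
  shows "zval E \<le> zval E'"
proof -
  have "min 1 (E * a i) \<le> min 1 (E' * a i)" if "i \<in> J" for i
    using that assms J_sub apos by (intro min.mono) (auto intro: mult_right_mono)
  then show ?thesis
    unfolding zval_def using assms J_sub by (simp, intro infsum_mono summable_zval_terms) auto
qed

lemma zval_gt1:
  assumes "0 < E"
  shows "1 < zval E"
proof -
  have "0 < min 1 (E * a 2)" using apos two_I assms by simp
  also have "\<dots> = sum (\<lambda>i. min 1 (E * a i)) {2}" by simp
  also have "\<dots> \<le> infsum (\<lambda>i. min 1 (E * a i)) J"
    using two_J assms J_sub apos
    by (intro finite_sum_le_infsum summable_zval_terms) (auto simp: less_imp_le subset_iff)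
  finally show ?thesis unfolding zval_def by simp
qed

lemma zratio_eq:
  assumes "0 < E"
  shows "zratio E = zval E / E"
proof -
  have "infsum (\<lambda>i. min (1 / E) (a i)) J = infsum (\<lambda>i. (1 / E) * min 1 (E * a i)) J"
    using assms by (intro infsum_cong) (simp add: min_def field_simps)
  also have "\<dots> = (1 / E) * infsum (\<lambda>i. min 1 (E * a i)) J"
    using assms J_sub by (intro infsum_cmult_right summable_zval_terms)
  finally show ?thesis unfolding zratio_def zval_def using assms by (simp add: field_simps)
qed

lemma zratio_pos: "0 < E \<Longrightarrow> 0 < zratio E"
  using zratio_eq[of E] zval_gt1[of E] by simp

lemma zratio_strict_anti:
  assumes "0 < E" "E < E'"
  shows "zratio E' < zratio E"
proof -
  have "infsum (\<lambda>i. min (1 / E') (a i)) J \<le> infsum (\<lambda>i. min (1 / E) (a i)) J"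
  proof (intro infsum_mono summable_zratio_terms)
    show "min (1 / E') (a i) \<le> min (1 / E) (a i)" for i
      using assms by (intro min.mono) (auto simp: frac_le)
  qed (use assms J_sub in auto)
  moreover have "1 / E' < 1 / E" using assms by (simp add: frac_less2)
  ultimately show ?thesis unfolding zratio_def by simp
qed

lemma zval_supporting_line:
  assumes E: "0 < E" "0 < E'"
  shows "zval E - E * (budget E' - budget E) \<le> zval E'"
proof -
  let ?u = "\<lambda>E i. min 1 (E * a i)" and ?v = "\<lambda>E i. a i * max 0 (- ln (E * a i))"
  have su: "?u E summable_on J" "?u E' summable_on J"
    and sv: "?v E summable_on J" "?v E' summable_on J"
    using E J_sub by (auto intro!: summable_zval_terms summable_budget_terms)
  have "0 \<le> infsum (\<lambda>i. (?u E' i - ?u E i) + E * (?v E' i - ?v E i)) J"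
  proof (rule infsum_nonneg)
    fix i assume "i \<in> J"
    then have "0 < a i" using apos J_sub by auto
    then have "min 1 (E * a i) - E * a i * (max 0 (- ln (E' * a i)) - max 0 (- ln (E * a i)))
        \<le> min 1 (E' * a i)"
      using E by (intro min_one_ln_tangent) auto
    moreover have "E * (?v E' i - ?v E i)
        = E * a i * (max 0 (- ln (E' * a i)) - max 0 (- ln (E * a i)))"
      by (simp only: right_diff_distrib mult.assoc)
    ultimately show "0 \<le> (?u E' i - ?u E i) + E * (?v E' i - ?v E i)" by linarith
  qed
  also have "\<dots> = (infsum (?u E') J - infsum (?u E) J) + E * (infsum (?v E') J - infsum (?v E) J)"
    using su sv
    by (simp add: infsum_add infsum_diff infsum_cmult_right summable_on_diff summable_on_cmult_right)
  finally show ?thesis unfolding zval_def budget_def by (simp add: algebra_simps)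
qed

lemma splits_at_pred_inverse:
  assumes "2 \<le> k" "k \<in> I"
  shows "splits_at (k - 1) (1 / a k)"
  using assms I_mono[OF _ assms(2)] I_mono[OF assms(2)] apos
  by (auto simp: splits_at_def field_simps)

lemma bb_eq_budget:
  assumes k: "2 \<le> k" "k \<in> I"
  shows "bb n a k = budget (1 / a k)"
proof -
  have "0 < a k" "1 \<le> k - 1" "k - 1 \<in> I" using apos k I_down[OF k(2)] by auto
  then show ?thesis
    using budget_split_at[OF _ _ _ splits_at_pred_inverse[OF k]] by (simp add: bb_def ln_div)
qed

lemma bb_anti:
  assumes "2 \<le> i" "i \<le> j" "j \<in> I"
  shows "bb n a j \<le> bb n a i"
proof -
  have iI: "i \<in> I" using assms I_down by auto
  then have "0 < a j" "0 < a i" "a j \<le> a i" using apos I_mono assms by auto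
  then have "1 / a i \<le> 1 / a j" by (simp add: frac_le)
  then show ?thesis using assms iI bb_eq_budget \<open>0 < a i\<close> by (simp add: budget_anti)
qed

definition "pieces = {k. 1 \<le> k \<and> enat (k + 1) \<le> n}"

lemma pieces_iff: "k \<in> pieces \<longleftrightarrow> 1 \<le> k \<and> Suc k \<in> I"
  by (auto simp: pieces_def Idx_iff)

lemma pieces_in_I: "k \<in> pieces \<Longrightarrow> 1 \<le> k \<and> k \<in> I \<and> Suc k \<in> I"
  using I_down[of "Suc k" k] by (auto simp: pieces_iff)

lemma Bp_iff: "b \<in> Bp n a k \<longleftrightarrow> bb n a (k + 1) \<le> b \<and> (k \<noteq> 1 \<longrightarrow> b < bb n a k)"
  by (auto simp: Bp_def numeral_2_eq_2)

lemma Bp_disjoint: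
  assumes "k \<in> pieces" "k' \<in> pieces" "b \<in> Bp n a k" "b \<in> Bp n a k'"
  shows "k = k'"
proof (rule ccontr)
  have k: "1 \<le> k" "k \<in> I" "1 \<le> k'" "k' \<in> I" using assms(1,2) pieces_in_I by auto
  assume "k \<noteq> k'"
  then consider "k < k'" | "k' < k" by linarith
  then show False
  proof cases
    case 1
    then have "bb n a k' \<le> bb n a (k + 1)" using k by (intro bb_anti) auto
    moreover have "bb n a (k + 1) \<le> b" using assms(3) by (simp add: Bp_iff)
    moreover have "b < bb n a k'" using assms(4) 1 k by (simp add: Bp_iff)
    ultimately show False by linarith
  next
    case 2
    then have "bb n a k \<le> bb n a (k' + 1)" using k by (intro bb_anti) auto
    moreover have "bb n a (k' + 1) \<le> b" using assms(4) by (simp add: Bp_iff)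
    moreover have "b < bb n a k" using assms(3) 2 k by (simp add: Bp_iff)
    ultimately show False by linarith
  qed
qed

lemma z0_on_piece:
  assumes b: "0 < b" and k: "k \<in> pieces" "b \<in> Bp n a k"
  shows "z0 n a b = k + d k * exp ((s k - b) / d k)"
proof -
  let ?h = "\<lambda>k. real k + d k * exp ((s k - b) / d k)"
  have "z0 n a b = infsum (\<lambda>k. indicator (Bp n a k) b * ?h k) pieces"
    using b by (simp add: z0_def pieces_def)
  also have "\<dots> = infsum (\<lambda>k. indicator (Bp n a k) b * ?h k) {k}"
  proof (rule infsum_cong_neutral)
    fix j assume "j \<in> pieces - {k}"
    then have "b \<notin> Bp n a j" using Bp_disjoint[OF k(1) _ k(2), of j] by auto
    then show "indicator (Bp n a j) b * ?h j = 0" by simp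
  qed (use k in auto)
  finally show ?thesis using k by simp
qed

lemma piece_exists:
  assumes "\<exists>j\<in>pieces. bb n a (j + 1) \<le> b"
  obtains k where "k \<in> pieces" "b \<in> Bp n a k"
proof -
  define P where "P j \<longleftrightarrow> j \<in> pieces \<and> bb n a (j + 1) \<le> b" for j
  define k where "k = (LEAST j. P j)"
  have "\<exists>j. P j" using assms unfolding P_def by blast
  then have "P k" unfolding k_def by (rule LeastI_ex)
  then have k: "k \<in> pieces" "bb n a (k + 1) \<le> b" unfolding P_def by blast+
  then have k1: "1 \<le> k" unfolding pieces_iff by blast
  have "b < bb n a k" if "k \<noteq> 1"
  proof -
    have "k - 1 < k" using k1 by simp
    then have "\<not> P (k - 1)" unfolding k_def by (rule not_less_Least)
    moreover have "k - 1 \<in> pieces"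
      using k1 that pieces_in_I[OF k(1)] unfolding pieces_iff by (cases k) auto
    moreover have "k - 1 + 1 = k" using k1 by simp
    ultimately show ?thesis unfolding P_def by (metis not_le)
  qed
  then have "b \<in> Bp n a k" using k(2) unfolding Bp_iff by blast
  with k(1) show ?thesis by (rule that)
qed

lemma piece_multiplier:
  assumes b: "0 < b" and k: "k \<in> pieces" "b \<in> Bp n a k"
  defines "E \<equiv> exp ((s k - b) / d k)"
  shows "splits_at k E" and "budget E = b" and "z0 n a b = zval E"
proof -
  have k1: "1 \<le> k" and kI: "Suc k \<in> I" and kI': "k \<in> I"
    using k I_down[of "Suc k" k] by (auto simp: pieces_iff)
  have dk: "0 < d k" using d_pos[OF kI] .
  have E0: "0 < E" and lnE: "ln E = (s k - b) / d k" by (simp_all add: E_def)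
  have "ln (E * a (Suc k)) \<le> 0"
    using k dk apos kI by (simp add: Bp_iff bb_def lnE ln_mult field_simps)
  then have Ek1: "E * a (Suc k) \<le> 1" using E0 apos kI by simp
  have Ek: "1 < E * a k" if "2 \<le> k"
  proof -
    have ak: "0 < a k" using apos kI' by auto
    have "bb n a k = s k + d k * ln (a k)"
      using s_Suc[of "k - 1"] d_Suc[of "k - 1"] eta_a[OF kI'] kI' that
      by (simp add: bb_def algebra_simps)
    then have "b < s k + d k * ln (a k)" using k that by (simp add: Bp_iff)
    then have "0 < ln E + ln (a k)" using dk by (simp add: lnE field_simps)
    then have "0 < ln (E * a k)" using E0 ak by (simp add: ln_mult)
    then show ?thesis using E0 ak by (simp add: ln_gt_zero_iff)
  qed
  show sp: "splits_at k E"
    unfolding splits_at_def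
  proof (intro conjI ballI impI)
    fix i assume i: "i \<in> I" "2 \<le> i \<and> i \<le> k"
    then have "E * a k \<le> E * a i" using I_mono[OF i(1) kI'] E0 by simp
    then show "1 \<le> E * a i" using Ek i by simp
  next
    fix i assume i: "i \<in> I" "k < i"
    then have "E * a i \<le> E * a (Suc k)" using I_mono[OF kI i(1)] E0 by simp
    then show "E * a i \<le> 1" using Ek1 by simp
  qed
  show "budget E = b" using budget_split_at[OF k1 kI' E0 sp] dk by (simp add: lnE)
  show "z0 n a b = zval E"
    using z0_on_piece[OF b k] zval_split_at[OF k1 kI' E0 sp] by (simp add: E_def algebra_simps)
qed

lemma feasible_nonneg: "feasible n a y \<Longrightarrow> i \<in> I \<Longrightarrow> 0 \<le> y i"
  unfolding feasible_def using one_I by (metis Idx_iff)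

section \<open>The explicit minimiser\<close>

definition xsplit :: "nat \<Rightarrow> real \<Rightarrow> real \<Rightarrow> nat \<Rightarrow> real" where
  "xsplit k E b i = (if i \<in> tail k then - ln (E * a i) / b else 0)"

context
  fixes k :: nat and E b :: real
  assumes b: "0 < b" and k: "1 \<le> k" "k \<in> I" and E: "0 < E" and sp: "splits_at k E"
    and bE: "budget E = b"
begin

lemma exp_xsplit: "exp (- b * xsplit k E b i) = (if i \<in> tail k then E * a i else 1)"
proof (cases "i \<in> tail k")
  case True
  then have "i \<in> I" using tail_sub by blast
  then have "0 < E * a i" using E apos by simp
  then show ?thesis using True b by (simp add: xsplit_def)
qed (simp add: xsplit_def)

lemma xsplit_nonneg: "0 \<le> xsplit k E b i"
proof (cases "i \<in> tail k")
  case True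
  then have "E * a i \<le> 1" "0 < E * a i"
    using sp E apos tail_sub by (auto simp: splits_at_def tail_def)
  then show ?thesis using True b by (simp add: xsplit_def divide_nonpos_pos)
qed (simp add: xsplit_def)

lemma I_split: "I = {1..k} \<union> tail k" "{1..k} \<inter> tail k = {}"
  using k I_down[OF k(2)] by (auto simp: tail_def Idx_iff)

lemma weighted_xsplit:
  "a i * xsplit k E b i = (if i \<in> tail k then (1 / b) * (eta (a i) - ln E * a i) else 0)"
proof (cases "i \<in> tail k")
  case True
  then have "0 < a i" "i \<in> I" using apos tail_sub by auto
  then have "a i * (- ln (E * a i)) = eta (a i) - ln E * a i"
    using E eta_a by (simp add: ln_mult algebra_simps)
  moreover have "a i * xsplit k E b i = (1 / b) * (a i * (- ln (E * a i)))"
    using True by (simp add: xsplit_def)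
  ultimately show ?thesis using True by simp
qed (simp add: xsplit_def)

lemma weighted_xsplit_sum:
  "(\<lambda>i. a i * xsplit k E b i) summable_on I" "infsum (\<lambda>i. a i * xsplit k E b i) I = 1"
proof -
  have sT: "(\<lambda>i. (1 / b) * (eta (a i) - ln E * a i)) summable_on tail k"
    using tail_sub by (intro summable_on_cmult_right summable_on_diff summable_eta summable_a)
  then show "(\<lambda>i. a i * xsplit k E b i) summable_on I"
    unfolding weighted_xsplit using tail_sub by (subst summable_on_cong_neutral[where T = "tail k"]) auto
  have "infsum (\<lambda>i. a i * xsplit k E b i) I = infsum (\<lambda>i. (1 / b) * (eta (a i) - ln E * a i)) (tail k)"
    unfolding weighted_xsplit using tail_sub by (intro infsum_cong_neutral) auto
  also have "\<dots> = (1 / b) * infsum (\<lambda>i. eta (a i) - ln E * a i) (tail k)"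
    using tail_sub
    by (intro infsum_cmult_right summable_on_diff summable_on_cmult_right summable_eta summable_a)
  also have "infsum (\<lambda>i. eta (a i) - ln E * a i) (tail k) = s k - ln E * d k"
    unfolding s_eq d_eq using tail_sub
    by (subst infsum_diff) (auto intro!: summable_eta summable_on_cmult_right summable_a infsum_cmult_right)
  also have "s k - ln E * d k = b" using bE budget_split_at[OF k E sp] by (simp add: mult.commute)
  finally show "infsum (\<lambda>i. a i * xsplit k E b i) I = 1" using b by simp
qed


lemma feasible_xsplit: "feasible n a (xsplit k E b)"
  unfolding feasible_def
proof (intro conjI allI impI ballI weighted_xsplit_sum)
  fix i assume "i \<notin> I" then show "xsplit k E b i = 0" using tail_sub by (auto simp: xsplit_def)
next
  fix i j assume ij: "i \<in> I" "j \<in> I" "i \<le> j"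
  show "xsplit k E b i \<le> xsplit k E b j"
  proof (cases "i \<in> tail k")
    case True
    then have "j \<in> tail k" using ij by (auto simp: tail_def)
    moreover have "ln (E * a j) \<le> ln (E * a i)" using I_mono[OF ij] E apos ij by simp
    ultimately show ?thesis using True b by (simp add: xsplit_def divide_right_mono)
  next
    case False
    then show ?thesis using xsplit_nonneg[of j] by (simp add: xsplit_def)
  qed
next
  show "xsplit k E b 1 = 0" using k by (simp add: xsplit_def tail_def)
qed

lemma exp_xsplit_sum:
  "(\<lambda>i. exp (- b * xsplit k E b i)) summable_on I" "infsum (\<lambda>i. exp (- b * xsplit k E b i)) I = k + E * d k"
proof -
  have eq: "exp (- b * xsplit k E b i) = E * a i" if "i \<in> tail k" for i
    using exp_xsplit[of i] that by simp
  have "(\<lambda>i. E * a i) summable_on tail k" using tail_sub by (intro summable_on_cmult_right summable_a)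
  then have e2: "(\<lambda>i. exp (- b * xsplit k E b i)) summable_on tail k"
    using summable_on_cong[of "tail k" "\<lambda>i. exp (- b * xsplit k E b i)" "\<lambda>i. E * a i"] eq by blast
  then show "(\<lambda>i. exp (- b * xsplit k E b i)) summable_on I"
    unfolding I_split(1) by (intro summable_on_union) simp_all
  have "infsum (\<lambda>i. exp (- b * xsplit k E b i)) I
      = infsum (\<lambda>i. exp (- b * xsplit k E b i)) {1..k} + infsum (\<lambda>i. exp (- b * xsplit k E b i)) (tail k)"
    unfolding I_split(1) using e2 I_split(2) by (intro infsum_Un_disjoint) simp_all
  also have "infsum (\<lambda>i. exp (- b * xsplit k E b i)) {1..k} = k"
    by (simp add: xsplit_def tail_def)
  also have "infsum (\<lambda>i. exp (- b * xsplit k E b i)) (tail k) = infsum (\<lambda>i. E * a i) (tail k)"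
    by (intro infsum_cong eq)
  also have "\<dots> = E * d k" unfolding d_eq by (intro infsum_cmult_right summable_a tail_sub)
  finally show "infsum (\<lambda>i. exp (- b * xsplit k E b i)) I = k + E * d k" .
qed

lemma lagrangian_termwise:
  assumes i: "i \<in> I" and y: "0 \<le> y" and y1: "i = 1 \<Longrightarrow> y = 0"
  defines "r \<equiv> exp (- b * y) - exp (- b * xsplit k E b i) + E * b * (a i * y - a i * xsplit k E b i)"
  shows "0 \<le> r" and "r = 0 \<Longrightarrow> y = xsplit k E b i"
proof -
  have "0 \<le> r \<and> (r = 0 \<longrightarrow> y = xsplit k E b i)"
  proof (cases "i \<in> tail k")
    case True
    have p: "0 < E * a i" using E apos i by simp
    have bx: "b * xsplit k E b i = - ln (E * a i)" using True b by (simp add: xsplit_def)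
    have "r = exp (- (b * y)) - (E * a i - E * a i * (b * y + ln (E * a i)))"
      unfolding r_def using exp_xsplit[of i] True bx by (simp add: algebra_simps)
    moreover have "b * y = b * xsplit k E b i \<Longrightarrow> y = xsplit k E b i" using b by simp
    ultimately show ?thesis
      using exp_minus_ge_tangent[OF p, of "b * y"] bx by auto
  next
    case False
    then have xi: "xsplit k E b i = 0" by (simp add: xsplit_def)
    show ?thesis
    proof (cases "i = 1")
      case False
      then have "1 \<le> E * a i"
        using sp i \<open>i \<notin> tail k\<close> by (auto simp: splits_at_def tail_def Idx_iff)
      moreover have "r = exp (- (b * y)) - (1 - (E * a i) * (b * y))"
        unfolding r_def using xi by (simp add: algebra_simps)
      moreover have "0 \<le> b * y" using y b by simp
      ultimately show ?thesis using exp_minus_ge_one_minus_mult[of "b * y" "E * a i"] xi b by auto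
    qed (use y1 xi r_def in simp)
  qed
  then show "0 \<le> r" and "r = 0 \<Longrightarrow> y = xsplit k E b i" by auto
qed

lemma xsplit_strict_min:
  assumes fy: "feasible n a y" and sy: "(\<lambda>i. exp (- b * y i)) summable_on I"
  shows "infsum (\<lambda>i. exp (- b * xsplit k E b i)) I \<le> infsum (\<lambda>i. exp (- b * y i)) I"
    and "infsum (\<lambda>i. exp (- b * y i)) I \<le> infsum (\<lambda>i. exp (- b * xsplit k E b i)) I \<Longrightarrow> y = xsplit k E b"
proof -
  let ?ex = "\<lambda>i. exp (- b * xsplit k E b i)" and ?ey = "\<lambda>i. exp (- b * y i)"
  let ?ax = "\<lambda>i. a i * xsplit k E b i" and ?ay = "\<lambda>i. a i * y i"
  define r where "r i = ?ey i - ?ex i + E * b * (?ay i - ?ax i)" for i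
  have ay: "?ay summable_on I" "infsum ?ay I = 1" using fy by (auto simp: feasible_def)
  have r: "0 \<le> r i" "r i = 0 \<Longrightarrow> y i = xsplit k E b i" if "i \<in> I" for i
    using lagrangian_termwise[OF that feasible_nonneg[OF fy that]] fy
    unfolding r_def feasible_def by auto
  have sr: "r summable_on I" unfolding r_def
    by (intro summable_on_add summable_on_diff summable_on_cmult_right sy exp_xsplit_sum(1)
        ay(1) weighted_xsplit_sum(1))
  have "infsum r I = infsum ?ey I - infsum ?ex I + E * b * (infsum ?ay I - infsum ?ax I)"
    unfolding r_def using sy exp_xsplit_sum(1) ay(1) weighted_xsplit_sum(1)
    by (simp add: infsum_add infsum_diff infsum_cmult_right summable_on_diff summable_on_cmult_right)
  then have ir: "infsum r I = infsum ?ey I - infsum ?ex I"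
    using ay(2) weighted_xsplit_sum(2) by simp
  moreover have "0 \<le> infsum r I" using r by (intro infsum_nonneg) auto
  ultimately show "infsum ?ex I \<le> infsum ?ey I" by simp
  assume "infsum ?ey I \<le> infsum ?ex I"
  then have "infsum r I \<le> 0" using ir by simp
  then have "r i = 0" if "i \<in> I" for i using nonneg_infsum_le_0D[OF _ sr _ that] r by auto
  then have "y i = xsplit k E b i" if "i \<in> I" for i using r that by auto
  moreover have "y i = xsplit k E b i" if "i \<notin> I" for i
    using fy that tail_sub by (auto simp: feasible_def xsplit_def)
  ultimately show "y = xsplit k E b" by blast
qed

lemma is_minimizer_xsplit: "is_minimizer n a b (xsplit k E b)"
  unfolding is_minimizer_def using feasible_xsplit exp_xsplit_sum(1) xsplit_strict_min(1) by blast

lemma xb_eq_xsplit: "xb n a b = xsplit k E b"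
  unfolding xb_def
proof (rule the_equality[where P = "is_minimizer n a b", OF is_minimizer_xsplit])
  fix y assume "is_minimizer n a b y"
  then show "y = xsplit k E b"
    using xsplit_strict_min(2) is_minimizer_xsplit unfolding is_minimizer_def by blast
qed

end

lemma d_tendsto_0: "d \<longlonglongrightarrow> 0"
  using infsum_tail_tendsto_0[OF asum] apos by (simp add: dd_def[abs_def] less_imp_le)

lemma s_tendsto_0: "s \<longlonglongrightarrow> 0"
  using infsum_tail_tendsto_0[OF eta_sum] eta_a_nonneg by (simp add: ss_def[abs_def])

lemma d_end:
  assumes "n = enat N"
  shows "d N = 0"
proof -
  have "tail N = {}" unfolding tail_def Idx_def using assms by auto
  then show ?thesis by (simp add: d_eq)
qed

lemma crit_1: "crit 1 = d 0"
  using d_Suc[of 0] one_I by (simp add: crit_def)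

lemma crit_nonneg: "k \<in> I \<Longrightarrow> 0 \<le> crit k"
  using d_nonneg[of k] apos by (auto simp: crit_def less_imp_le)

lemma crit_Suc_le:
  assumes "1 \<le> k" "Suc k \<in> I"
  shows "crit (Suc k) \<le> crit k"
proof -
  have "a (Suc k) \<le> a k" using I_mono[OF I_down[OF assms(2)] assms(2)] assms(1) by simp
  then have "real k * a (Suc k) \<le> real k * a k" by (simp add: mult_left_mono)
  then show ?thesis using d_Suc[OF assms(2)] by (simp add: crit_def algebra_simps)
qed

lemma crit_anti:
  assumes "1 \<le> i" "i \<le> j" "j \<in> I"
  shows "crit j \<le> crit i"
  using assms(2,3)
proof (induction j rule: dec_induct)
  case (step j)
  then have "crit j \<le> crit i" using I_down assms(1) by auto
  moreover have "crit (Suc j) \<le> crit j" using step assms(1) by (intro crit_Suc_le) auto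
  ultimately show ?case by simp
qed simp

text \<open>The \<open>k - k div 2\<close> weights \<open>a\<^sub>i \<ge> a\<^sub>k\<close> with \<open>k div 2 < i \<le> k\<close> are part of
  \<open>d (k div 2)\<close>.\<close>
lemma mult_a_le_tail:
  assumes kI: "k \<in> I"
  shows "real k * a k \<le> 2 * d (k div 2)"
proof -
  define h where "h = k div 2"
  have sub: "{h<..k} \<subseteq> tail h" using I_down[OF kI] by (auto simp: tail_def)
  have "real (k - h) * a k = (\<Sum>i\<in>{h<..k}. a k)" by simp
  also have "\<dots> \<le> (\<Sum>i\<in>{h<..k}. a i)"
    using I_mono[OF _ kI] sub by (intro sum_mono) (auto simp: tail_def)
  also have "\<dots> \<le> d h" unfolding d_eq
    using sub apos tail_sub by (intro finite_sum_le_infsum summable_a) (auto simp: less_imp_le subset_iff)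
  finally have le: "real (k - h) * a k \<le> d h" .
  have "real k \<le> 2 * real (k - h)" by (simp add: h_def)
  then have "real k * a k \<le> 2 * real (k - h) * a k"
    using apos kI by (intro mult_right_mono) auto
  also have "\<dots> \<le> 2 * d h" using le by simp
  finally show ?thesis by (simp add: h_def)
qed

text \<open>The index \<open>m\<close> of the paper is characterised by \<open>\<theta> crit\<^sub>m \<ge> 1 > \<theta> crit\<^sub>m\<^sub>+\<^sub>1\<close>
  (the first inequality being vacuous for \<open>m = 1\<close>).\<close>
definition threshold_index :: "real \<Rightarrow> nat \<Rightarrow> bool" where
  "threshold_index \<theta> m \<longleftrightarrow> 1 \<le> m \<and> Suc m \<in> I \<and> (2 \<le> m \<longrightarrow> 1 \<le> \<theta> * crit m) \<and> \<theta> * crit (Suc m) < 1"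

lemma mm_threshold_index:
  assumes th: "0 < \<theta>"
    and fin: "finite {k. 1 \<le> k \<and> enat (k + 1) \<le> n \<and> 1 / \<theta> \<le> d k + real k * a k}"
    and small_end: "\<And>N. n = enat N \<Longrightarrow> a N * real N < 1 / \<theta>"
  shows "threshold_index \<theta> (mm n a \<theta>)"
proof (cases "\<theta> < 1 / d 0")
  case True
  have "\<theta> * crit 2 \<le> \<theta> * d 0" using crit_anti[of 1 2] two_I crit_1 th by simp
  also have "\<theta> * d 0 < 1" using True d_pos[of 0] one_I by (simp add: field_simps)
  finally show ?thesis using True two_I by (simp add: mm_def threshold_index_def numeral_2_eq_2)
next
  case False
  let ?S = "{k. 1 \<le> k \<and> enat (k + 1) \<le> n \<and> 1 / \<theta> \<le> d k + real k * a k}"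
  define m where "m = Max ?S"
  have "0 < d 0" using d_pos[of 0] one_I by simp
  then have "1 / \<theta> \<le> d 0" using False th by (simp add: field_simps not_less)
  moreover have "d 1 + real 1 * a 1 = d 0" using d_Suc[of 0] one_I by simp
  moreover have "enat (1 + 1) \<le> n" using two_I by (simp add: Idx_iff numeral_2_eq_2)
  ultimately have "1 \<in> ?S" by simp
  then have "m \<in> ?S" unfolding m_def using fin by (intro Max_in) auto
  then have m: "1 \<le> m" "Suc m \<in> I" "1 \<le> \<theta> * crit m"
    using th by (auto simp: crit_def Idx_iff field_simps)
  have "\<theta> * crit (Suc m) < 1"
  proof (cases "enat (Suc m + 1) \<le> n")
    case True
    have "Suc m \<notin> ?S" using Max_ge[OF fin, of "Suc m"] by (auto simp: m_def)
    then have "\<not> 1 / \<theta> \<le> crit (Suc m)" using True by (simp add: crit_def)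
    then show ?thesis using th by (simp add: field_simps not_le)
  next
    case False
    then obtain N where N: "n = enat N" "N = Suc m" using m(2) by (cases n) (auto simp: Idx_iff)
    have "crit N = real N * a N" unfolding crit_def using d_end[OF N(1)] by simp
    then show ?thesis using small_end[OF N(1)] th N(2) by (simp add: field_simps mult.commute)
  qed
  then show ?thesis using False m by (simp add: mm_def threshold_index_def m_def)
qed


definition opt_mult :: "real \<Rightarrow> nat \<Rightarrow> real" where
  "opt_mult \<theta> m = \<theta> * m / (1 - \<theta> * d m)"

definition opt_b :: "real \<Rightarrow> nat \<Rightarrow> real" where
  "opt_b \<theta> m = s m + d m * ln ((1 - \<theta> * d m) / (\<theta> * real m))"

context
  fixes \<theta> :: real and m :: nat
  assumes th: "0 < \<theta>" and tm: "threshold_index \<theta> m"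
begin

lemma threshold_m: "1 \<le> m" "m \<in> I" "Suc m \<in> I"
  using tm I_down[of "Suc m" m] by (auto simp: threshold_index_def)

lemma threshold_d_lt: "\<theta> * d m < 1"
proof -
  have "d m \<le> crit (Suc m)"
    using d_Suc[OF threshold_m(3)] apos threshold_m(3) by (simp add: crit_def)
  then have "\<theta> * d m \<le> \<theta> * crit (Suc m)" using th by simp
  then show ?thesis using tm by (simp add: threshold_index_def)
qed

lemma opt_mult_pos: "0 < opt_mult \<theta> m"
  using th threshold_m threshold_d_lt by (simp add: opt_mult_def)

lemma opt_mult_a_Suc_lt: "opt_mult \<theta> m * a (Suc m) < 1"
proof -
  have "\<theta> * (real m * a (Suc m)) < 1 - \<theta> * d m"
    using tm d_Suc[OF threshold_m(3)] by (simp add: threshold_index_def crit_def algebra_simps)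
  then show ?thesis using threshold_d_lt by (simp add: opt_mult_def field_simps)
qed

lemma splits_at_opt_mult: "splits_at m (opt_mult \<theta> m)"
  unfolding splits_at_def
proof (intro conjI ballI impI)
  fix i assume i: "i \<in> I" "2 \<le> i \<and> i \<le> m"
  then have "1 \<le> \<theta> * crit m" using tm by (simp add: threshold_index_def)
  then have "1 - \<theta> * d m \<le> \<theta> * real m * a m" by (simp add: crit_def algebra_simps)
  then have "1 \<le> opt_mult \<theta> m * a m" using threshold_d_lt by (simp add: opt_mult_def field_simps)
  moreover have "opt_mult \<theta> m * a m \<le> opt_mult \<theta> m * a i"
    using I_mono[OF i(1) threshold_m(2)] i(2) opt_mult_pos by simp
  ultimately show "1 \<le> opt_mult \<theta> m * a i" by simp
next
  fix i assume i: "i \<in> I" "m < i"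
  have "opt_mult \<theta> m * a i \<le> opt_mult \<theta> m * a (Suc m)"
    using I_mono[OF threshold_m(3) i(1)] i(2) opt_mult_pos by simp
  then show "opt_mult \<theta> m * a i \<le> 1" using opt_mult_a_Suc_lt by simp
qed

lemma budget_opt_mult: "budget (opt_mult \<theta> m) = opt_b \<theta> m"
proof -
  have "ln (opt_mult \<theta> m) = - ln ((1 - \<theta> * d m) / (\<theta> * real m))"
    using th threshold_m threshold_d_lt by (simp add: opt_mult_def ln_div)
  then show ?thesis
    using budget_split_at[OF threshold_m(1,2) opt_mult_pos splits_at_opt_mult] by (simp add: opt_b_def)
qed

lemma opt_b_pos: "0 < opt_b \<theta> m"
proof -
  have "budget (opt_mult \<theta> m + 1) < budget (opt_mult \<theta> m)"
    using threshold_m opt_mult_pos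
    by (intro budget_strict_anti[of _ _ "Suc m"] opt_mult_a_Suc_lt) (auto simp: J_def)
  then show ?thesis using budget_nonneg[of "opt_mult \<theta> m + 1"] budget_opt_mult by simp
qed

lemma zval_opt_mult: "zval (opt_mult \<theta> m) = m / (1 - \<theta> * d m)"
proof -
  have "zval (opt_mult \<theta> m) = m + opt_mult \<theta> m * d m"
    by (rule zval_split_at[OF threshold_m(1,2) opt_mult_pos splits_at_opt_mult])
  also have "\<dots> = m / (1 - \<theta> * d m)"
    using threshold_d_lt by (simp add: opt_mult_def field_simps)
  finally show ?thesis .
qed

lemma opt_mult_div_zval: "opt_mult \<theta> m / zval (opt_mult \<theta> m) = \<theta>"
proof -
  have "0 < 1 - \<theta> * d m" "0 < real m" using threshold_d_lt threshold_m by simp_all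
  then have "(\<theta> * m / (1 - \<theta> * d m)) / (m / (1 - \<theta> * d m)) = \<theta>" by simp
  then show ?thesis unfolding zval_opt_mult by (simp only: opt_mult_def)
qed

lemma opt_value_eta:
  "opt_b \<theta> m * \<theta> + ln (real m / (1 - d m * \<theta>))
     = \<theta> * s m + eta (1 - \<theta> * d m) + (1 - \<theta> * d m) * ln (real m) + d m * eta \<theta>"
proof -
  define q where "q = 1 - \<theta> * d m"
  have q: "0 < q" and m0: "0 < real m" using threshold_d_lt threshold_m by (simp_all add: q_def)
  have "opt_b \<theta> m * \<theta> = \<theta> * s m + (\<theta> * d m) * (ln q - ln \<theta> - ln (real m))"
    using q th m0 by (simp add: opt_b_def q_def[symmetric] ln_div ln_mult algebra_simps)
  also have "\<theta> * d m = 1 - q" by (simp add: q_def)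
  finally have "opt_b \<theta> m * \<theta> = \<theta> * s m + (1 - q) * (ln q - ln \<theta> - ln (real m))" .
  moreover have "ln (real m / (1 - d m * \<theta>)) = ln (real m) - ln q"
    using q m0 by (simp add: q_def mult.commute ln_div)
  moreover have "eta q = - q * ln q" "eta \<theta> = - \<theta> * ln \<theta>" using q th by (simp_all add: eta_def)
  moreover have "d m * (- \<theta> * ln \<theta>) = - (1 - q) * ln \<theta>" by (simp add: q_def algebra_simps)
  ultimately show ?thesis by (simp add: q_def[symmetric] algebra_simps)
qed

end

section \<open>The function \<open>f\<close>\<close>

text \<open>For \<open>b \<le> 0\<close> the value \<open>1 / a\<^sub>N\<close> is only meaningful when \<open>n = N\<close> is finite; it is the
  limit of the multiplier as \<open>b \<rightarrow> 0\<^sup>+\<close> in that case.\<close>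
definition mult :: "real \<Rightarrow> real" where
  "mult b = (if b \<le> 0 then 1 / a (the_enat n) else (THE E. 0 < E \<and> budget E = b))"

definition valid_mult :: "real \<Rightarrow> bool" where
  "valid_mult b \<longleftrightarrow> 0 < mult b \<and> budget (mult b) = b \<and> z0 n a b = zval (mult b) \<and>
     (\<exists>j\<in>J. mult b * a j \<le> 1)"

lemma valid_mult_pos:
  assumes b: "0 < b" and ex: "\<exists>j\<in>pieces. bb n a (j + 1) \<le> b"
  shows "valid_mult b"
proof -
  obtain k where k: "k \<in> pieces" "b \<in> Bp n a k" using piece_exists[OF ex] .
  define E where "E = exp ((s k - b) / d k)"
  have E: "0 < E" "budget E = b" "z0 n a b = zval E"
    using piece_multiplier(2,3)[OF b k] by (simp_all add: E_def)
  have "mult b = E" unfolding mult_def using b E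
    by (auto intro!: the_equality dest: budget_inj)
  moreover obtain j where "j \<in> J" "E * a j < 1" using budget_pos_witness E b by auto
  then have "\<exists>j\<in>J. E * a j \<le> 1" by (meson less_imp_le)
  ultimately show ?thesis using E by (auto simp: valid_mult_def)
qed

definition ff_deriv :: "real \<Rightarrow> real \<Rightarrow> real" where
  "ff_deriv \<theta> b = \<theta> - mult b / z0 n a b"

context
  fixes D :: "real set" and \<theta> :: real
  assumes D: "D = {0..} \<or> D = {0<..}"
    and valid: "\<And>b. b \<in> D \<Longrightarrow> valid_mult b"
begin

lemma D_interval: "is_interval D" and interior_D: "interior D = {0<..}"
  using D by (auto simp: interior_open)

lemma D_nonneg: "b \<in> D \<Longrightarrow> 0 \<le> b" and pos_in_D: "0 < b \<Longrightarrow> b \<in> D"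
  using D by auto

lemma mult_anti:
  assumes "b \<in> D" "y \<in> D" "b \<le> y"
  shows "mult y \<le> mult b"
proof (rule ccontr)
  assume lt: "\<not> mult y \<le> mult b"
  then have "budget (mult y) \<le> budget (mult b)"
    using valid assms by (intro budget_anti) (auto simp: valid_mult_def)
  then have "y = b" using valid assms by (simp add: valid_mult_def)
  then show False using lt by simp
qed

lemma mult_strict_anti:
  assumes "b \<in> D" "y \<in> D" "b < y"
  shows "mult y < mult b"
proof -
  have "mult y \<noteq> mult b"
    using valid[OF assms(1)] valid[OF assms(2)] assms(3) by (auto simp: valid_mult_def)
  then show ?thesis using mult_anti[of b y] assms by simp
qed

lemma mult_lower_eventually:
  assumes b: "b \<in> D" and \<epsilon>: "0 < \<epsilon>"
  shows "\<forall>\<^sub>F y in at b within D. mult b - \<epsilon> < mult y"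
proof (cases "mult b - \<epsilon> \<le> 0")
  case True
  have "mult b - \<epsilon> < mult y" if "y \<in> D" for y
    using valid[OF that] True by (simp add: valid_mult_def)
  then show ?thesis by (auto simp: eventually_at_filter intro!: always_eventually)
next
  case False
  obtain j where j: "j \<in> J" "mult b * a j \<le> 1" using valid[OF b] by (auto simp: valid_mult_def)
  moreover have "0 < \<epsilon> * a j" using \<epsilon> apos J_sub j(1) by auto
  ultimately have "(mult b - \<epsilon>) * a j < 1" by (simp add: left_diff_distrib)
  moreover have "0 < mult b" "budget (mult b) = b" using valid[OF b] by (simp_all add: valid_mult_def)
  ultimately have lt: "b < budget (mult b - \<epsilon>)"
    using budget_strict_anti[of "mult b - \<epsilon>" "mult b" j] False \<epsilon> j(1) by simp
  have "mult b - \<epsilon> < mult y" if y: "y \<in> D" "\<bar>y - b\<bar> < budget (mult b - \<epsilon>) - b" for y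
  proof (cases "y \<le> b")
    case True
    then show ?thesis using mult_anti[OF y(1) b] \<epsilon> by simp
  next
    case False
    show ?thesis
    proof (rule ccontr)
      assume "\<not> ?thesis"
      then have "budget (mult b - \<epsilon>) \<le> budget (mult y)"
        using valid[OF y(1)] by (intro budget_anti) (auto simp: valid_mult_def not_less)
      then show False using y False valid[OF y(1)] by (simp add: valid_mult_def)
    qed
  qed
  then show ?thesis
    unfolding eventually_at dist_real_def using lt by (intro exI[of _ "budget (mult b - \<epsilon>) - b"]) simp
qed

lemma mult_upper_eventually:
  assumes b: "b \<in> D" and \<epsilon>: "0 < \<epsilon>"
  shows "\<forall>\<^sub>F y in at b within D. mult y < mult b + \<epsilon>"
proof (cases "b = 0")
  case True
  have "mult y < mult b + \<epsilon>" if "y \<in> D" for y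
    using mult_anti[OF b that] D_nonneg[OF that] True \<epsilon> by simp
  then show ?thesis by (auto simp: eventually_at_filter intro!: always_eventually)
next
  case False
  then have b0: "0 < budget (mult b)" using valid[OF b] D_nonneg[OF b] by (simp add: valid_mult_def)
  then obtain j where j: "j \<in> J" "mult b * a j < 1" by (rule budget_pos_witness)
  then have lt: "budget (mult b + \<epsilon>) < b"
    using budget_strict_anti[OF _ _ j] \<epsilon> valid[OF b] by (auto simp: valid_mult_def)
  have "mult y < mult b + \<epsilon>" if y: "y \<in> D" "\<bar>y - b\<bar> < b - budget (mult b + \<epsilon>)" for y
  proof (cases "b \<le> y")
    case True
    then show ?thesis using mult_anti[OF b y(1)] \<epsilon> by simp
  next
    case False
    show ?thesis
    proof (rule ccontr)
      assume "\<not> ?thesis"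
      then have "budget (mult y) \<le> budget (mult b + \<epsilon>)"
        using valid[OF b] \<epsilon> by (intro budget_anti) (auto simp: valid_mult_def not_less)
      then show False using y False valid[OF y(1)] by (simp add: valid_mult_def)
    qed
  qed
  then show ?thesis
    unfolding eventually_at dist_real_def using lt by (intro exI[of _ "b - budget (mult b + \<epsilon>)"]) simp
qed

lemma mult_continuous: "continuous_on D mult"
  unfolding continuous_on_def
proof (intro ballI tendstoI)
  fix b \<epsilon> :: real assume "b \<in> D" "0 < \<epsilon>"
  from eventually_conj[OF mult_lower_eventually[OF this] mult_upper_eventually[OF this]]
  show "\<forall>\<^sub>F y in at b within D. dist (mult y) (mult b) < \<epsilon>"
    by eventually_elim (simp add: dist_real_def abs_less_iff)
qed

lemma z0_gt1: "b \<in> D \<Longrightarrow> 1 < z0 n a b"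
  using valid[of b] zval_gt1[of "mult b"] by (simp add: valid_mult_def)

lemma z0_difference_quotient_bounds:
  assumes b: "b \<in> D" and y: "y \<in> D" and lt: "b < y"
  shows "- mult b \<le> (z0 n a y - z0 n a b) / (y - b)" "(z0 n a y - z0 n a b) / (y - b) \<le> - mult y"
proof -
  have "zval (mult b) - mult b * (y - b) \<le> zval (mult y)"
    "zval (mult y) - mult y * (b - y) \<le> zval (mult b)"
    using zval_supporting_line[of "mult b" "mult y"] zval_supporting_line[of "mult y" "mult b"]
      valid[OF b] valid[OF y] by (auto simp: valid_mult_def)
  moreover have "z0 n a y = zval (mult y)" "z0 n a b = zval (mult b)"
    using valid[OF b] valid[OF y] by (auto simp: valid_mult_def)
  ultimately show "- mult b \<le> (z0 n a y - z0 n a b) / (y - b)"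
    "(z0 n a y - z0 n a b) / (y - b) \<le> - mult y"
    using lt by (auto simp: field_simps)
qed

lemma z0_has_derivative:
  assumes b: "b \<in> D"
  shows "(z0 n a has_real_derivative - mult b) (at b within D)"
proof -
  let ?q = "\<lambda>y. (z0 n a y - z0 n a b) / (y - b)"
  have "\<bar>?q y - - mult b\<bar> \<le> \<bar>mult y - mult b\<bar>" if y: "y \<in> D" "y \<noteq> b" for y
  proof (cases "b < y")
    case True
    then show ?thesis using z0_difference_quotient_bounds[OF b y(1)] mult_anti[OF b y(1)] by simp
  next
    case False
    then have "y < b" using y by simp
    moreover have "?q y = (z0 n a b - z0 n a y) / (b - y)"
      using minus_divide_divide[of "z0 n a y - z0 n a b" "y - b"] by simp
    ultimately show ?thesis using z0_difference_quotient_bounds[OF y(1) b] mult_anti[OF y(1) b] by simp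
  qed
  then have "\<forall>\<^sub>F y in at b within D. norm (?q y - - mult b) \<le> \<bar>mult y - mult b\<bar>"
    by (auto simp: eventually_at_filter)
  moreover have "(mult \<longlongrightarrow> mult b) (at b within D)"
    using mult_continuous b by (simp add: continuous_on_def)
  then have "((\<lambda>y. \<bar>mult y - mult b\<bar>) \<longlongrightarrow> 0) (at b within D)"
    by (rule tendsto_rabs_zero[OF LIM_zero])
  ultimately have "((\<lambda>y. ?q y - - mult b) \<longlongrightarrow> 0) (at b within D)"
    by (rule Lim_null_comparison)
  then show ?thesis
    unfolding has_field_derivative_iff by (rule LIM_zero_iff[THEN iffD1])
qed

lemma ff_has_derivative:
  assumes b: "b \<in> D"
  shows "(ff n a \<theta> has_real_derivative ff_deriv \<theta> b) (at b within D)"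
proof -
  have "0 < z0 n a b" using z0_gt1[OF b] by simp
  then have "((\<lambda>b. \<theta> * b + ln (z0 n a b)) has_real_derivative \<theta> + (1 / z0 n a b) * (- mult b))
      (at b within D)"
    by (intro DERIV_add DERIV_cmult_Id DERIV_chain2[OF DERIV_ln_divide z0_has_derivative[OF b]])
  then show ?thesis by (simp add: ff_def[abs_def] ff_deriv_def)
qed

lemma ff_has_derivative_at:
  assumes b: "0 < b"
  shows "(ff n a \<theta> has_real_derivative ff_deriv \<theta> b) (at b)"
proof -
  have "(ff n a \<theta> has_real_derivative ff_deriv \<theta> b) (at b within {0<..})"
    by (rule has_field_derivative_subset[OF ff_has_derivative[OF pos_in_D[OF b]]]) (use D in auto)
  moreover have "at b within {0<..} = at b" using b by (intro at_within_open) auto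
  ultimately show ?thesis by metis
qed

lemma ff_continuous: "continuous_on D (ff n a \<theta>)"
  using ff_has_derivative DERIV_continuous continuous_on_eq_continuous_within by blast

lemma ff_deriv_continuous: "continuous_on D (ff_deriv \<theta>)"
proof -
  have "continuous_on D (z0 n a)"
    using z0_has_derivative DERIV_continuous continuous_on_eq_continuous_within by blast
  moreover have "\<And>b. b \<in> D \<Longrightarrow> z0 n a b \<noteq> 0" using z0_gt1 by fastforce
  ultimately show ?thesis
    unfolding ff_deriv_def[abs_def] using mult_continuous by (intro continuous_intros) auto
qed

lemma ff_deriv_eq_zratio: "b \<in> D \<Longrightarrow> ff_deriv \<theta> b = \<theta> - 1 / zratio (mult b)"
  using valid[of b] zratio_eq[of "mult b"] by (simp add: valid_mult_def ff_deriv_def)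

lemma ff_deriv_strict_mono:
  assumes "b \<in> D" "y \<in> D" "b < y"
  shows "ff_deriv \<theta> b < ff_deriv \<theta> y"
proof -
  have "mult y < mult b" using mult_strict_anti assms by simp
  then have "zratio (mult b) < zratio (mult y)"
    using valid assms by (intro zratio_strict_anti) (auto simp: valid_mult_def)
  then have "1 / zratio (mult y) < 1 / zratio (mult b)"
    using zratio_pos valid assms by (intro frac_less2) (auto simp: valid_mult_def)
  then show ?thesis using ff_deriv_eq_zratio assms by simp
qed

lemma ff_convex: "convex_on D (ff n a \<theta>)"
proof (rule convex_on_interval_mono_deriv[OF D_interval ff_continuous])
  show "(ff n a \<theta> has_real_derivative ff_deriv \<theta> x) (at x)" if "x \<in> interior D" for x
    using that ff_has_derivative_at by (simp add: interior_D)
  show "ff_deriv \<theta> x \<le> ff_deriv \<theta> y" if "x \<in> interior D" "y \<in> interior D" "x \<le> y" for x y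
  proof (cases "x = y")
    case False
    then have "ff_deriv \<theta> x < ff_deriv \<theta> y"
      using that by (intro ff_deriv_strict_mono pos_in_D) (auto simp: interior_D)
    then show ?thesis by simp
  qed simp
qed

lemma ff_unique_min:
  assumes bs: "bs \<in> D" and crit: "ff_deriv \<theta> bs = 0 \<or> (bs = 0 \<and> 0 \<le> ff_deriv \<theta> bs)"
  shows "ff n a \<theta> bs = (INF b\<in>D. ff n a \<theta> b)"
    and "\<forall>b\<in>D. ff n a \<theta> b = (INF b\<in>D. ff n a \<theta> b) \<longrightarrow> b = bs"
proof -
  have lt: "ff n a \<theta> bs < ff n a \<theta> b" if "b \<in> D" "b \<noteq> bs" for b
    using D_interval ff_continuous _ bs _ _ that
  proof (rule strict_min_by_deriv_sign)
    show "\<And>x. x \<in> interior D \<Longrightarrow> (ff n a \<theta> has_real_derivative ff_deriv \<theta> x) (at x)"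
      by (simp add: interior_D ff_has_derivative_at)
    show "0 < ff_deriv \<theta> x" if "x \<in> interior D" "bs < x" for x
      using ff_deriv_strict_mono[OF bs pos_in_D that(2)] crit that by (auto simp: interior_D)
    show "ff_deriv \<theta> x < 0" if "x \<in> interior D" "x < bs" for x
      using ff_deriv_strict_mono[OF pos_in_D bs that(2)] crit that by (auto simp: interior_D)
  qed
  have le: "ff n a \<theta> bs \<le> ff n a \<theta> b" if "b \<in> D" for b
    using lt[OF that] by (cases "b = bs") auto
  show eq: "ff n a \<theta> bs = (INF b\<in>D. ff n a \<theta> b)"
    by (rule cInf_eq_minimum[symmetric]) (use bs le in auto)
  show "\<forall>b\<in>D. ff n a \<theta> b = (INF b\<in>D. ff n a \<theta> b) \<longrightarrow> b = bs"
  proof (intro ballI impI)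
    fix b assume b: "b \<in> D" "ff n a \<theta> b = (INF b\<in>D. ff n a \<theta> b)"
    show "b = bs"
    proof (rule ccontr)
      assume "b \<noteq> bs"
      then have "ff n a \<theta> bs < ff n a \<theta> b" using lt b(1) by blast
      then show False using eq b(2) by simp
    qed
  qed
qed

lemma ff_pos: "0 < \<theta> \<Longrightarrow> b \<in> D \<Longrightarrow> 0 < ff n a \<theta> b"
  using z0_gt1[of b] D_nonneg[of b] by (simp add: ff_def add_nonneg_pos)

lemma ff_tendsto_at_top:
  assumes "0 < \<theta>"
  shows "filterlim (ff n a \<theta>) at_top at_top"
proof (rule filterlim_at_top_mono)
  show "LIM x at_top. \<theta> * x :> at_top"
    using assms by (intro filterlim_tendsto_pos_mult_at_top[OF tendsto_const _ filterlim_ident])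
  show "\<forall>\<^sub>F b in at_top. \<theta> * b \<le> ff n a \<theta> b"
    using eventually_gt_at_top[of 0]
    by eventually_elim (use z0_gt1 pos_in_D in \<open>force simp: ff_def\<close>)
qed

lemma mult_gt_inverse_a:
  assumes b: "b \<in> D" and k: "2 \<le> k" "k \<in> I" and lt: "b < bb n a k"
  shows "1 / a k < mult b"
proof (rule ccontr)
  assume "\<not> ?thesis"
  then have "budget (1 / a k) \<le> budget (mult b)"
    using valid[OF b] by (intro budget_anti) (auto simp: valid_mult_def)
  then show False using valid[OF b] bb_eq_budget[OF k] lt by (simp add: valid_mult_def)
qed

context
  fixes m :: nat
  assumes th: "0 < \<theta>" and tm: "threshold_index \<theta> m"
begin

lemma opt_b_in_D: "opt_b \<theta> m \<in> D"
  using pos_in_D opt_b_pos[OF th tm] .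

lemma mult_opt_b: "mult (opt_b \<theta> m) = opt_mult \<theta> m"
proof -
  have v: "0 < mult (opt_b \<theta> m)" "budget (mult (opt_b \<theta> m)) = opt_b \<theta> m"
    using valid[OF opt_b_in_D] by (simp_all add: valid_mult_def)
  show ?thesis
    using budget_inj[OF v(1) opt_mult_pos[OF th tm]] v(2) budget_opt_mult[OF th tm] opt_b_pos[OF th tm]
    by simp
qed

lemma z0_opt_b: "z0 n a (opt_b \<theta> m) = zval (opt_mult \<theta> m)"
  using valid[OF opt_b_in_D] unfolding valid_mult_def mult_opt_b by simp

lemma ff_deriv_opt_b: "ff_deriv \<theta> (opt_b \<theta> m) = 0"
  using opt_mult_div_zval[OF th tm] by (simp add: ff_deriv_def z0_opt_b mult_opt_b)

lemma ff_opt_b: "ff n a \<theta> (opt_b \<theta> m) = opt_b \<theta> m * \<theta> + ln (real m / (1 - d m * \<theta>))"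
  by (simp add: ff_def z0_opt_b zval_opt_mult[OF th tm] mult.commute)

lemma xb_opt_b: "xb n a (opt_b \<theta> m) = xsplit m (opt_mult \<theta> m) (opt_b \<theta> m)"
  using opt_b_pos[OF th tm] threshold_m(1,2)[OF th tm] opt_mult_pos[OF th tm]
    splits_at_opt_mult[OF th tm] budget_opt_mult[OF th tm]
  by (rule xb_eq_xsplit)

lemma xb_opt_b_eq:
  "xb n a (opt_b \<theta> m) i =
     (if i \<in> tail m then 1 / opt_b \<theta> m * ln ((1 - \<theta> * d m) / (a i * \<theta> * real m)) else 0)"
proof (cases "i \<in> tail m")
  case True
  then have "0 < a i" using apos tail_sub by auto
  then have "1 / (opt_mult \<theta> m * a i) = (1 - \<theta> * d m) / (a i * \<theta> * real m)"
    using th threshold_m[OF th tm] threshold_d_lt[OF th tm] by (simp add: opt_mult_def field_simps)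
  moreover have "0 < opt_mult \<theta> m * a i" using opt_mult_pos[OF th tm] \<open>0 < a i\<close> by simp
  then have "ln (1 / (opt_mult \<theta> m * a i)) = - ln (opt_mult \<theta> m * a i)"
    by (simp only: inverse_eq_divide[symmetric] ln_inverse)
  ultimately have "- ln (opt_mult \<theta> m * a i) = ln ((1 - \<theta> * d m) / (a i * \<theta> * real m))"
    by simp
  then show ?thesis using True by (simp add: xb_opt_b xsplit_def divide_inverse mult.commute)
qed (simp add: xb_opt_b xsplit_def)

text \<open>At the optimum \<open>x\<^sub>i exp (- b x\<^sub>i) = E a\<^sub>i x\<^sub>i\<close>, so the left sum is \<open>E\<close>, and
  \<open>E = \<theta> zval E\<close>.\<close>
lemma xb_opt_b_moment:
  defines "x \<equiv> xb n a (opt_b \<theta> m)" and "bs \<equiv> opt_b \<theta> m"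
  shows "(\<lambda>i. x i * exp (- bs * x i)) summable_on I"
    and "(\<lambda>i. exp (- bs * x i)) summable_on I"
    and "infsum (\<lambda>i. x i * exp (- bs * x i)) I = \<theta> * infsum (\<lambda>i. exp (- bs * x i)) I"
proof -
  note hyps = opt_b_pos[OF th tm] threshold_m(1,2)[OF th tm] opt_mult_pos[OF th tm]
    splits_at_opt_mult[OF th tm] budget_opt_mult[OF th tm]
  have x: "x = xsplit m (opt_mult \<theta> m) bs" unfolding x_def bs_def by (rule xb_opt_b)
  have xe: "x i * exp (- bs * x i) = opt_mult \<theta> m * (a i * x i)" for i
    unfolding x bs_def using exp_xsplit[OF hyps, of i] by (cases "i \<in> tail m") (simp_all add: xsplit_def)
  have ax: "(\<lambda>i. a i * x i) summable_on I" "infsum (\<lambda>i. a i * x i) I = 1"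
    unfolding x bs_def using weighted_xsplit_sum[OF hyps] by auto
  show "(\<lambda>i. x i * exp (- bs * x i)) summable_on I"
    unfolding xe by (intro summable_on_cmult_right ax)
  show "(\<lambda>i. exp (- bs * x i)) summable_on I"
    unfolding x bs_def by (rule exp_xsplit_sum(1)[OF hyps])
  have "infsum (\<lambda>i. x i * exp (- bs * x i)) I = opt_mult \<theta> m"
    unfolding xe using ax by (simp add: infsum_cmult_right)
  also have "\<dots> = \<theta> * zval (opt_mult \<theta> m)"
    using opt_mult_div_zval[OF th tm] zval_gt1[OF hyps(4)] by (simp add: field_simps)
  also have "zval (opt_mult \<theta> m) = m + opt_mult \<theta> m * d m"
    using zval_split_at[OF hyps(2,3,4,5)] .
  also have "m + opt_mult \<theta> m * d m = infsum (\<lambda>i. exp (- bs * x i)) I"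
    unfolding x bs_def using exp_xsplit_sum(2)[OF hyps] by simp
  finally show "infsum (\<lambda>i. x i * exp (- bs * x i)) I = \<theta> * infsum (\<lambda>i. exp (- bs * x i)) I" .
qed

end

end

lemma zval_inverse_a:
  assumes "1 \<le> k" "k \<in> I"
  shows "zval (1 / a k) = k + d k / a k"
  using zval_split_at[OF assms _ splits_at_inverse[OF assms]] apos assms by simp

lemma zratio_inverse_a:
  assumes "1 \<le> k" "k \<in> I"
  shows "zratio (1 / a k) = crit k"
proof -
  have ak: "0 < a k" using apos assms by auto
  then have "zratio (1 / a k) = zval (1 / a k) * a k" using zratio_eq[of "1 / a k"] by simp
  also have "\<dots> = crit k" using zval_inverse_a[OF assms] ak by (simp add: crit_def field_simps)
  finally show ?thesis .
qed

section \<open>Finitely many weights\<close>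

definition flat_start :: "nat \<Rightarrow> nat" where
  "flat_start N = N - Max {k. 1 \<le> k \<and> k \<le> N - 1 \<and> a (N - k + 1) = a N}"

context
  fixes N :: nat
  assumes nN: "n = enat N"
begin

lemma N2: "2 \<le> N" using n2 nN by (simp add: numeral_eq_enat)

lemma I_fin: "I = {1..N}" using nN by (auto simp: Idx_def)

lemma N_in_I: "N \<in> I" and N_in_J: "N \<in> J" using N2 by (auto simp: I_fin J_def)

lemma the_enat_n: "the_enat n = N" using nN by simp

lemma splits_at_inverse_aN: "splits_at N (1 / a N)"
  using splits_at_inverse[OF _ N_in_I] N2 by simp

lemma tail_N: "tail N = {}"
  unfolding tail_def Idx_def using nN by auto

lemma budget_inverse_aN: "budget (1 / a N) = 0"
  using budget_split_at[OF _ N_in_I _ splits_at_inverse_aN] N2 apos N_in_I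
  by (simp add: s_eq d_eq tail_N)

lemma zval_inverse_aN: "zval (1 / a N) = N"
  using zval_inverse_a[OF _ N_in_I] N2 d_end[OF nN] by simp

lemma valid_mult_finite: "0 \<le> b \<Longrightarrow> valid_mult b"
proof (cases "b = 0")
  case True
  have "mult 0 = 1 / a N" by (simp add: mult_def the_enat_n)
  moreover have "z0 n a 0 = N" by (simp add: z0_def the_enat_n)
  ultimately show ?thesis
    using True budget_inverse_aN zval_inverse_aN N_in_J apos N_in_I by (auto simp: valid_mult_def)
next
  case False
  assume "0 \<le> b"
  then have b: "0 < b" using False by simp
  have "N - 1 \<in> pieces" using N2 N_in_I by (simp add: pieces_iff)
  moreover have "bb n a (N - 1 + 1) = 0"
    using N2 N_in_I bb_eq_budget[of N] budget_inverse_aN by simp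
  ultimately show ?thesis using b by (intro valid_mult_pos) force+
qed

lemma valid_mult_nonneg_reals: "b \<in> {0..} \<Longrightarrow> valid_mult b"
  using valid_mult_finite by simp

lemma flat_start:
  defines "mt \<equiv> flat_start N"
  shows "1 \<le> mt" "mt < N" "\<And>i. i \<in> I \<Longrightarrow> mt < i \<Longrightarrow> a i = a N"
    and "2 \<le> mt \<Longrightarrow> a N < a mt"
proof -
  define S where "S = {k. 1 \<le> k \<and> k \<le> N - 1 \<and> a (N - k + 1) = a N}"
  define M where "M = Max S"
  have finS: "finite S" unfolding S_def by (rule finite_subset[of _ "{..N}"]) auto
  have "1 \<in> S" using N2 by (simp add: S_def)
  then have "M \<in> S" unfolding M_def using finS by (intro Max_in) auto
  then have M: "1 \<le> M" "M \<le> N - 1" "a (N - M + 1) = a N" by (auto simp: S_def)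
  have mtM: "mt = N - M" by (simp add: mt_def flat_start_def S_def M_def)
  show "1 \<le> mt" "mt < N" using M N2 mtM by auto
  show "a i = a N" if "i \<in> I" "mt < i" for i
  proof -
    have "N - M + 1 \<in> I" using M N2 by (simp add: I_fin)
    then have "a i \<le> a (N - M + 1)" using I_mono that mtM by auto
    moreover have "a N \<le> a i" using I_mono[OF that(1) N_in_I] that by (simp add: I_fin)
    ultimately show ?thesis using M by simp
  qed
  assume "2 \<le> mt"
  have "a N \<le> a mt" using I_mono[OF _ N_in_I] \<open>mt < N\<close> \<open>1 \<le> mt\<close> by (simp add: I_fin)
  moreover have "a mt \<noteq> a N"
  proof
    assume "a mt = a N"
    moreover have "N - (M + 1) + 1 = mt" "M + 1 \<le> N - 1" using \<open>2 \<le> mt\<close> mtM M by auto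
    ultimately have "M + 1 \<in> S" by (simp add: S_def)
    then show False using Max_ge[OF finS, of "M + 1"] by (simp add: M_def)
  qed
  ultimately show "a N < a mt" by simp
qed

lemma bb_flat_start_pos:
  assumes "2 \<le> flat_start N"
  shows "0 < bb n a (flat_start N)"
proof -
  let ?mt = "flat_start N"
  have mt: "?mt \<in> I" "0 < a ?mt" using flat_start(1,2) apos by (auto simp: I_fin)
  then have "1 / a ?mt * a N < 1" using flat_start(4)[OF assms] by (simp add: field_simps)
  then have "budget (1 / a N) < budget (1 / a ?mt)"
    using mt flat_start(4)[OF assms] apos N_in_I N_in_J
    by (intro budget_strict_anti) (auto simp: frac_less2)
  then show ?thesis using bb_eq_budget[OF assms mt(1)] budget_inverse_aN by simp
qed

lemma xb_near_0:
  assumes b: "0 < b" and small: "2 \<le> flat_start N \<Longrightarrow> b < bb n a (flat_start N)"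
  shows "xb n a b = (\<lambda>i. if i \<in> tail (flat_start N) then 1 / (a N * real (N - flat_start N)) else 0)"
proof -
  let ?mt = "flat_start N"
  have mt: "1 \<le> ?mt" "?mt \<in> I" "Suc ?mt \<in> I" "?mt \<in> pieces"
    using flat_start(1,2) by (auto simp: I_fin pieces_iff)
  have tail: "tail ?mt = {?mt<..N}" by (auto simp: tail_def I_fin)
  have flat: "a i = a N" if "i \<in> {?mt<..N}" for i
    using that flat_start(3)[of i] flat_start(1) by (simp add: I_fin)
  have "d ?mt = (\<Sum>i\<in>{?mt<..N}. a i)" unfolding d_eq tail by simp
  also have "\<dots> = (\<Sum>i\<in>{?mt<..N}. a N)" by (rule sum.cong[OF refl flat])
  finally have d_mt: "d ?mt = real (N - ?mt) * a N" by simp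
  have "s ?mt = (\<Sum>i\<in>{?mt<..N}. eta (a i))" unfolding s_eq tail by simp
  also have "\<dots> = (\<Sum>i\<in>{?mt<..N}. eta (a N))"
  proof (rule sum.cong[OF refl])
    fix i assume "i \<in> {?mt<..N}"
    then show "eta (a i) = eta (a N)" using flat[of i] by simp
  qed
  finally have s_mt: "s ?mt = - d ?mt * ln (a N)"
    using apos N_in_I by (simp add: d_mt eta_def)
  have "a (?mt + 1) = a N" using flat[of "?mt + 1"] flat_start(2) by simp
  then have "bb n a (?mt + 1) = budget (1 / a N)"
    using bb_eq_budget[of "?mt + 1"] mt by simp
  moreover have "?mt \<noteq> 1 \<Longrightarrow> 2 \<le> ?mt" using mt(1) by simp
  ultimately have "b \<in> Bp n a ?mt" using small b budget_inverse_aN by (simp add: Bp_iff)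
  define E where "E = exp ((s ?mt - b) / d ?mt)"
  have E: "splits_at ?mt E" "budget E = b"
    using piece_multiplier(1,2)[OF b mt(4) \<open>b \<in> Bp n a ?mt\<close>] by (simp_all add: E_def)
  have dpos: "0 < d ?mt" using d_pos[OF mt(3)] .
  have "0 < a N" using apos N_in_I by simp
  then have "ln (E * a N) = (s ?mt - b) / d ?mt + ln (a N)" by (simp add: E_def ln_mult)
  also have "\<dots> = - b / d ?mt" using dpos by (simp add: s_mt field_simps)
  finally have "- ln (E * a N) / b = 1 / d ?mt" using b by simp
  then have "xsplit ?mt E b i = (if i \<in> tail ?mt then 1 / d ?mt else 0)" for i
    using flat[of i] by (simp add: xsplit_def tail)
  moreover have "xb n a b = xsplit ?mt E b"
    by (rule xb_eq_xsplit[OF b mt(1,2) _ E]) (simp add: E_def)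
  ultimately show ?thesis by (auto simp: d_mt mult.commute)
qed

end


section \<open>Infinitely many weights\<close>

context
  assumes ninf: "n = \<infinity>"
begin

lemma I_inf: "i \<in> I \<longleftrightarrow> 1 \<le> i"
  using ninf by (simp add: Idx_iff)

lemma crit_tendsto_0: "crit \<longlonglongrightarrow> 0"
proof (rule tendsto_sandwich[of "\<lambda>_. 0" _ _ "\<lambda>k. d k + 2 * d (k div 2)"])
  show "\<forall>\<^sub>F k in sequentially. 0 \<le> crit k"
    using eventually_ge_at_top[of 1] by eventually_elim (simp add: crit_nonneg I_inf)
  show "\<forall>\<^sub>F k in sequentially. crit k \<le> d k + 2 * d (k div 2)"
    using eventually_ge_at_top[of 1] by eventually_elim (simp add: crit_def mult_a_le_tail I_inf)
  have "(\<lambda>k. d (k div 2)) \<longlonglongrightarrow> 0"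
    by (rule filterlim_compose[OF d_tendsto_0 filterlim_at_top_div_const_nat]) simp
  then show "(\<lambda>k. d k + 2 * d (k div 2)) \<longlonglongrightarrow> 0"
    using tendsto_add[OF d_tendsto_0 tendsto_mult_right_zero] by simp
qed simp

lemma crit_eventually_less:
  assumes "0 < r"
  shows "\<exists>K. \<forall>k\<ge>K. crit k < r"
proof -
  obtain K where "\<forall>k\<ge>K. norm (crit k - 0) < r" using LIMSEQ_D[OF crit_tendsto_0 assms] by blast
  then show ?thesis by (auto simp: abs_less_iff)
qed

lemma exists_smaller_a:
  assumes k: "1 \<le> k"
  shows "\<exists>j>k. a j < a k"
proof -
  have "0 < a k" using apos k I_inf by simp
  then obtain K where K: "\<forall>j\<ge>K. crit j < a k" using crit_eventually_less by blast
  define j where "j = max K (k + 1)"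
  have "a j \<le> real j * a j" using apos I_inf[of j] by (simp add: j_def)
  then have "a j \<le> crit j" using d_nonneg[of j] by (simp add: crit_def)
  also have "crit j < a k" using K by (simp add: j_def)
  finally show ?thesis by (intro exI[of _ j]) (simp add: j_def)
qed

lemma bb_pos:
  assumes k: "2 \<le> k"
  shows "0 < bb n a k"
proof -
  have kI: "k \<in> I" and ak: "0 < a k" using k apos I_inf by auto
  obtain j where j: "k < j" "a j < a k" using exists_smaller_a[of k] k by auto
  then have "j \<in> J" "1 / a k * a j < 1" using k ak by (auto simp: J_def I_inf field_simps)
  then have "budget (1 / a k + 1) < budget (1 / a k)" using ak by (intro budget_strict_anti) auto
  then show ?thesis using budget_nonneg[of "1 / a k + 1"] bb_eq_budget[OF k kI] by simp
qed

lemma valid_mult_infinite: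
  assumes b: "0 < b"
  shows "valid_mult b"
proof (rule valid_mult_pos[OF b])
  obtain K where "\<forall>k\<ge>K. norm (s k - 0) < b" using LIMSEQ_D[OF s_tendsto_0 b] by blast
  then have "\<bar>s (max K 1)\<bar> < b" by simp
  then have sK: "s (max K 1) < b" by simp
  have "ln (a (Suc (max K 1))) \<le> 0" using a_le1 apos I_inf by simp
  then have "bb n a (max K 1 + 1) \<le> s (max K 1)"
    using d_nonneg[of "max K 1"] by (simp add: bb_def mult_nonneg_nonpos)
  moreover have "max K 1 \<in> pieces" by (simp add: pieces_iff I_inf)
  ultimately show "\<exists>j\<in>pieces. bb n a (j + 1) \<le> b" using sK by force
qed

lemma valid_mult_pos_reals: "b \<in> {0<..} \<Longrightarrow> valid_mult b"
  using valid_mult_infinite by simp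

lemmas mult_gt_inverse_a_inf = mult_gt_inverse_a[OF disjI2[OF refl] valid_mult_pos_reals]

lemma finite_crit_ge:
  assumes "0 < \<theta>"
  shows "finite {k. 1 \<le> k \<and> enat (k + 1) \<le> n \<and> 1 / \<theta> \<le> d k + real k * a k}"
proof -
  have "0 < 1 / \<theta>" using assms by simp
  then obtain K where K: "\<forall>k\<ge>K. crit k < 1 / \<theta>" using crit_eventually_less by blast
  have "{k. 1 \<le> k \<and> enat (k + 1) \<le> n \<and> 1 / \<theta> \<le> d k + real k * a k} \<subseteq> {..<K}"
  proof
    fix k assume "k \<in> {k. 1 \<le> k \<and> enat (k + 1) \<le> n \<and> 1 / \<theta> \<le> d k + real k * a k}"
    then have "\<not> crit k < 1 / \<theta>" by (simp add: crit_def)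
    then show "k \<in> {..<K}" using K by (auto simp: not_le[symmetric])
  qed
  then show ?thesis by (rule finite_subset) simp
qed

lemma ff_tendsto_at_right_0:
  assumes th: "0 < \<theta>"
  shows "filterlim (ff n a \<theta>) at_top (at_right 0)"
  unfolding filterlim_at_top
proof
  fix Z :: real
  define K where "K = nat \<lceil>exp Z\<rceil> + 1"
  have K1: "1 \<le> K" and KI: "K + 1 \<in> I" by (simp_all add: K_def I_inf)
  have "exp Z \<le> real (K + 1)" unfolding K_def by linarith
  then have KZ: "Z \<le> ln (real (K + 1))" by (simp add: ln_ge_iff)
  have pos: "0 < bb n a (K + 1)" using K1 by (intro bb_pos) simp
  show "\<forall>\<^sub>F b in at_right 0. Z \<le> ff n a \<theta> b"
    using eventually_at_right_real[OF pos]
  proof eventually_elim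
    case (elim b)
    then have b: "0 < b" "b < bb n a (K + 1)" by auto
    have "1 / a (K + 1) < mult b"
      using mult_gt_inverse_a_inf[of b "K + 1"] b K1 KI by simp
    then have "zval (1 / a (K + 1)) \<le> zval (mult b)" using apos KI by (intro zval_mono) auto
    moreover have "0 \<le> d (K + 1) / a (K + 1)"
      using d_nonneg[of "K + 1"] apos KI by (intro divide_nonneg_pos) auto
    then have "real (K + 1) \<le> zval (1 / a (K + 1))" using zval_inverse_a[OF _ KI] by simp
    ultimately have "real (K + 1) \<le> z0 n a b" using valid_mult_infinite[OF b(1)] by (simp add: valid_mult_def)
    then have "ln (real (K + 1)) \<le> ln (z0 n a b)" by simp
    moreover have "0 \<le> \<theta> * b" using th b by simp
    ultimately show "Z \<le> ff n a \<theta> b" using KZ by (simp add: ff_def)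
  qed
qed

lemma ff_deriv_tendsto_at_bot:
  assumes th: "0 < \<theta>"
  shows "filterlim (ff_deriv \<theta>) at_bot (at_right 0)"
  unfolding filterlim_at_bot
proof
  fix Z :: real
  define c where "c = max 1 (\<theta> - Z)"
  have c: "0 < c" "\<theta> - Z \<le> c" by (auto simp: c_def)
  have "0 < 1 / c" using c by simp
  then obtain K where K: "\<forall>k\<ge>K. crit k < 1 / c" using crit_eventually_less by blast
  define k where "k = max K 1 + 1"
  have k: "2 \<le> k" "k \<in> I" "1 \<le> k" by (auto simp: k_def I_inf)
  have "0 < crit k" using d_nonneg[of k] apos k by (simp add: crit_def add_nonneg_pos)
  moreover have "crit k < 1 / c" using K by (simp add: k_def)
  ultimately have ck: "c < 1 / crit k" using c by (simp add: field_simps)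
  show "\<forall>\<^sub>F b in at_right 0. ff_deriv \<theta> b \<le> Z"
    using eventually_at_right_real[OF bb_pos[OF k(1)]]
  proof eventually_elim
    case (elim b)
    then have b: "b \<in> {0<..}" "b < bb n a k" by auto
    have "1 / a k < mult b" using mult_gt_inverse_a_inf[of b k] b k by simp
    then have "zratio (mult b) < zratio (1 / a k)" using apos k by (intro zratio_strict_anti) auto
    moreover have "0 < mult b" using valid_mult_pos_reals[OF b(1)] by (simp add: valid_mult_def)
    ultimately have "1 / crit k < 1 / zratio (mult b)"
      using zratio_pos[of "mult b"] zratio_inverse_a[OF k(3,2)] by (intro frac_less2) auto
    moreover have "ff_deriv \<theta> b = \<theta> - 1 / zratio (mult b)"
      using ff_deriv_eq_zratio[OF disjI2[OF refl] valid_mult_pos_reals b(1)] .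
    ultimately show "ff_deriv \<theta> b \<le> Z" using ck c by simp
  qed
qed

lemma ff_shape_infinite:
  assumes th: "0 < \<theta>"
  shows "(\<forall>b>0. ff n a \<theta> b > 0) \<and> convex_on {0<..} (ff n a \<theta>) \<and>
      (\<exists>f'. continuous_on {0<..} f' \<and> (\<forall>b>0. (ff n a \<theta> has_real_derivative f' b) (at b)) \<and>
        filterlim f' at_bot (at_right 0)) \<and>
      filterlim (ff n a \<theta>) at_top (at_right 0) \<and> filterlim (ff n a \<theta>) at_top at_top"
proof -
  note valid = disjI2[OF refl] valid_mult_pos_reals
  show ?thesis
    using ff_pos[OF valid th] ff_convex[OF valid] ff_deriv_continuous[OF valid]
      ff_has_derivative_at[OF valid] ff_deriv_tendsto_at_bot[OF th]
      ff_tendsto_at_right_0[OF th] ff_tendsto_at_top[OF valid th]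
    by (auto intro!: exI[of _ "ff_deriv \<theta>"])
qed

end

lemma opt_b_unique_min:
  assumes D: "D = {0..} \<or> D = {0<..}" and valid: "\<And>b. b \<in> D \<Longrightarrow> valid_mult b"
    and th: "0 < \<theta>" and tm: "threshold_index \<theta> m"
  shows "ff n a \<theta> (opt_b \<theta> m) = (INF b\<in>D. ff n a \<theta> b)"
    and "\<forall>b\<in>D. ff n a \<theta> b = (INF b\<in>D. ff n a \<theta> b) \<longrightarrow> b = opt_b \<theta> m"
  using ff_unique_min[OF D valid opt_b_in_D[OF D valid th tm]] ff_deriv_opt_b[OF D valid th tm]
  by auto

context
  fixes N :: nat and \<theta> :: real
  assumes nN: "n = enat N" and th: "0 < \<theta>"
begin

lemma ff_0: "ff n a \<theta> 0 = ln (real N)"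
  by (simp add: ff_def z0_def the_enat_n[OF nN])

lemma ff_deriv_0: "ff_deriv \<theta> 0 = \<theta> - 1 / (a N * real N)"
  by (simp add: ff_deriv_def mult_def z0_def the_enat_n[OF nN])

lemma min_at_0:
  assumes "1 / \<theta> \<le> a N * real N"
  shows "ff n a \<theta> 0 = (INF b\<in>{0..}. ff n a \<theta> b)"
    and "\<forall>b\<ge>0. ff n a \<theta> b = (INF b\<in>{0..}. ff n a \<theta> b) \<longrightarrow> b = 0"
proof -
  have "0 < a N * real N" using apos N_in_I[OF nN] N2[OF nN] by simp
  then have "0 \<le> ff_deriv \<theta> 0" using assms th by (simp add: ff_deriv_0 field_simps)
  then show "ff n a \<theta> 0 = (INF b\<in>{0..}. ff n a \<theta> b)"
    and "\<forall>b\<ge>0. ff n a \<theta> b = (INF b\<in>{0..}. ff n a \<theta> b) \<longrightarrow> b = 0"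
    using ff_unique_min[OF disjI1[OF refl] valid_mult_nonneg_reals[OF nN], of 0 \<theta>] by auto
qed

lemma xb_tendsto_at_0:
  "((\<lambda>b. xb n a b i) \<longlongrightarrow> (if i \<in> tail (flat_start N) then 1 / (a N * real (N - flat_start N)) else 0))
     (at_right 0)"
proof -
  define \<delta> where "\<delta> = (if 2 \<le> flat_start N then bb n a (flat_start N) else 1)"
  have "0 < \<delta>" using bb_flat_start_pos[OF nN] by (simp add: \<delta>_def)
  have "\<forall>\<^sub>F b in at_right 0. xb n a b i =
      (if i \<in> tail (flat_start N) then 1 / (a N * real (N - flat_start N)) else 0)"
    using eventually_at_right_real[OF \<open>0 < \<delta>\<close>]
  proof eventually_elim
    case (elim b)
    then have "0 < b" "2 \<le> flat_start N \<Longrightarrow> b < bb n a (flat_start N)" by (auto simp: \<delta>_def)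
    then show ?case by (simp add: xb_near_0[OF nN])
  qed
  then show ?thesis by (rule tendsto_eventually)
qed

lemma xb_limits_at_0:
  shows "\<forall>i. 1 \<le> i \<and> i \<le> flat_start N \<longrightarrow> ((\<lambda>b. xb n a b i) \<longlongrightarrow> 0) (at_right 0)"
    and "\<forall>i. flat_start N < i \<and> i \<le> N \<longrightarrow>
      ((\<lambda>b. xb n a b i) \<longlongrightarrow> 1 / (a N * real (N - flat_start N))) (at_right 0)"
proof -
  show "\<forall>i. 1 \<le> i \<and> i \<le> flat_start N \<longrightarrow> ((\<lambda>b. xb n a b i) \<longlongrightarrow> 0) (at_right 0)"
  proof (intro allI impI)
    fix i assume "1 \<le> i \<and> i \<le> flat_start N"
    then have "i \<notin> tail (flat_start N)" by (simp add: tail_def)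
    then show "((\<lambda>b. xb n a b i) \<longlongrightarrow> 0) (at_right 0)" using xb_tendsto_at_0[of i] by simp
  qed
  show "\<forall>i. flat_start N < i \<and> i \<le> N \<longrightarrow>
      ((\<lambda>b. xb n a b i) \<longlongrightarrow> 1 / (a N * real (N - flat_start N))) (at_right 0)"
  proof (intro allI impI)
    fix i assume "flat_start N < i \<and> i \<le> N"
    then have "i \<in> tail (flat_start N)" by (simp add: tail_def I_fin[OF nN])
    then show "((\<lambda>b. xb n a b i) \<longlongrightarrow> 1 / (a N * real (N - flat_start N))) (at_right 0)"
      using xb_tendsto_at_0[of i] by simp
  qed
qed

lemma ff_shape_finite:
  "(\<forall>b\<ge>0. ff n a \<theta> b > 0) \<and> convex_on {0..} (ff n a \<theta>) \<and>
   (\<exists>f'. continuous_on {0..} f' \<and> (\<forall>b\<ge>0. (ff n a \<theta> has_real_derivative f' b) (at b within {0..}))) \<and>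
   (ff n a \<theta> has_real_derivative (\<theta> - 1 / (a N * real N))) (at 0 within {0..}) \<and>
   filterlim (ff n a \<theta>) at_top at_top"
proof -
  note valid = disjI1[OF refl] valid_mult_nonneg_reals[OF nN]
  have "\<forall>b\<ge>0. (ff n a \<theta> has_real_derivative ff_deriv \<theta> b) (at b within {0..})"
    using ff_has_derivative[OF valid] by simp
  then show ?thesis
    using ff_pos[OF valid th] ff_convex[OF valid] ff_deriv_continuous[OF valid]
      ff_deriv_0 ff_tendsto_at_top[OF valid th]
    by (auto intro!: exI[of _ "ff_deriv \<theta>"])
qed

lemma threshold_index_finite:
  assumes "a N * real N < 1 / \<theta>"
  shows "threshold_index \<theta> (mm n a \<theta>)"
proof (rule mm_threshold_index[OF th])
  show "finite {k. 1 \<le> k \<and> enat (k + 1) \<le> n \<and> 1 / \<theta> \<le> d k + real k * a k}"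
    by (rule finite_subset[of _ "{..N}"]) (auto simp: nN)
  show "a N' * real N' < 1 / \<theta>" if "n = enat N'" for N' using that nN assms by simp
qed

lemma interior_min_finite:
  assumes "a N * real N < 1 / \<theta>"
  defines "m \<equiv> mm n a \<theta>"
  shows "0 < opt_b \<theta> m \<and> ff n a \<theta> (opt_b \<theta> m) = (INF b\<in>{0..}. ff n a \<theta> b) \<and>
      (\<forall>b\<ge>0. ff n a \<theta> b = (INF b\<in>{0..}. ff n a \<theta> b) \<longrightarrow> b = opt_b \<theta> m) \<and>
      ff n a \<theta> (opt_b \<theta> m) = opt_b \<theta> m * \<theta> + ln (real m / (1 - d m * \<theta>)) \<and>
      (\<forall>i. 1 \<le> i \<and> i \<le> m \<longrightarrow> xb n a (opt_b \<theta> m) i = 0) \<and>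
      (\<forall>i. m < i \<and> i \<le> N \<longrightarrow>
         xb n a (opt_b \<theta> m) i = 1 / opt_b \<theta> m * ln ((1 - \<theta> * d m) / (a i * \<theta> * real m)))"
proof -
  note valid = disjI1[OF refl] valid_mult_nonneg_reals[OF nN]
  have tm: "threshold_index \<theta> m" unfolding m_def by (rule threshold_index_finite[OF assms(1)])
  show ?thesis
    using opt_b_pos[OF th tm] opt_b_unique_min[OF valid th tm] ff_opt_b[OF valid th tm]
      xb_opt_b_eq[OF valid th tm]
    by (auto simp: tail_def I_fin[OF nN])
qed

end


lemma lemma5_finite:
  assumes th: "0 < \<theta>" and fin: "n \<noteq> \<infinity>"
  shows "let N = the_enat n; f = ff n a \<theta>; d = dd n a; s = ss n a; m = mm n a \<theta>;
          bs = (if a N * real N \<ge> 1 / \<theta> then 0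
                else s m + d m * ln ((1 - \<theta> * d m) / (\<theta> * real m)));
          mt = N - Max {k. 1 \<le> k \<and> k \<le> N - 1 \<and> a (N - k + 1) = a N}
      in (\<forall>b\<ge>0. f b > 0) \<and> convex_on {0..} f \<and>
         (\<exists>f'. continuous_on {0..} f' \<and>
               (\<forall>b\<ge>0. (f has_real_derivative f' b) (at b within {0..}))) \<and>
         f 0 = ln (real N) \<and>
         (f has_real_derivative (\<theta> - 1 / (a N * real N))) (at 0 within {0..}) \<and>
         filterlim f at_top at_top \<and>
         bs \<ge> 0 \<and> f bs = (INF b\<in>{0..}. f b) \<and>
         (\<forall>b\<ge>0. f b = (INF b\<in>{0..}. f b) \<longrightarrow> b = bs) \<and>
         (a N * real N \<ge> 1 / \<theta> \<longrightarrow>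
            bs = 0 \<and> f bs = ln (real N) \<and>
            (\<forall>i. 1 \<le> i \<and> i \<le> mt \<longrightarrow> ((\<lambda>b. xb n a b i) \<longlongrightarrow> 0) (at_right 0)) \<and>
            (\<forall>i. mt < i \<and> i \<le> N \<longrightarrow>
               ((\<lambda>b. xb n a b i) \<longlongrightarrow> 1 / (a N * real (N - mt))) (at_right 0))) \<and>
         (a N * real N < 1 / \<theta> \<longrightarrow>
            bs = s m + d m * ln ((1 - \<theta> * d m) / (\<theta> * real m)) \<and>
            f bs = bs * \<theta> + ln (real m / (1 - d m * \<theta>)) \<and>
            (\<forall>i. 1 \<le> i \<and> i \<le> m \<longrightarrow> xb n a bs i = 0) \<and>
            (\<forall>i. m < i \<and> i \<le> N \<longrightarrow>
               xb n a bs i = 1 / bs * ln ((1 - \<theta> * d m) / (a i * \<theta> * real m))))"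
proof -
  obtain N where nN: "n = enat N" using fin by auto
  show ?thesis
    unfolding Let_def the_enat_n[OF nN] flat_start_def[symmetric] opt_b_def[symmetric]
    using ff_shape_finite[OF nN th] ff_0[OF nN th] min_at_0[OF nN th] xb_limits_at_0[OF nN th]
      interior_min_finite[OF nN th]
    by (auto simp: not_le)
qed


lemma lemma5_infinite:
  assumes th: "0 < \<theta>" and ninf: "n = \<infinity>"
  shows "let f = ff n a \<theta>; d = dd n a; s = ss n a; m = mm n a \<theta>;
          bs = s m + d m * ln ((1 - \<theta> * d m) / (\<theta> * real m))
      in (\<forall>b>0. f b > 0) \<and> convex_on {0<..} f \<and>
         (\<exists>f'. continuous_on {0<..} f' \<and>
               (\<forall>b>0. (f has_real_derivative f' b) (at b)) \<and>
               filterlim f' at_bot (at_right 0)) \<and>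
         filterlim f at_top (at_right 0) \<and>
         filterlim f at_top at_top \<and>
         bs > 0 \<and> f bs = (INF b\<in>{0<..}. f b) \<and>
         (\<forall>b>0. f b = (INF b\<in>{0<..}. f b) \<longrightarrow> b = bs) \<and>
         f bs = \<theta> * s m + eta (1 - \<theta> * d m) + (1 - \<theta> * d m) * ln (real m)
                + d m * eta \<theta> \<and>
         (\<forall>i. 1 \<le> i \<and> i \<le> m \<longrightarrow> xb n a bs i = 0) \<and>
         (\<forall>i. m < i \<longrightarrow>
            xb n a bs i = 1 / bs * ln ((1 - \<theta> * d m) / (a i * \<theta> * real m))) \<and>
         (\<lambda>i. xb n a bs i * exp (- bs * xb n a bs i)) summable_on Idx n \<and>
         (\<lambda>i. exp (- bs * xb n a bs i)) summable_on Idx n \<and>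
         infsum (\<lambda>i. xb n a bs i * exp (- bs * xb n a bs i)) (Idx n) =
           \<theta> * infsum (\<lambda>i. exp (- bs * xb n a bs i)) (Idx n)"
proof -
  note valid = disjI2[OF refl] valid_mult_pos_reals[OF ninf]
  define m where "m = mm n a \<theta>"
  have tm: "threshold_index \<theta> m"
    unfolding m_def using mm_threshold_index[OF th finite_crit_ge[OF ninf th]] ninf by simp
  have x: "(\<forall>i. 1 \<le> i \<and> i \<le> m \<longrightarrow> xb n a (opt_b \<theta> m) i = 0) \<and>
      (\<forall>i. m < i \<longrightarrow>
         xb n a (opt_b \<theta> m) i = 1 / opt_b \<theta> m * ln ((1 - \<theta> * d m) / (a i * \<theta> * real m)))"
    using xb_opt_b_eq[OF valid th tm] threshold_m[OF th tm] by (auto simp: tail_def I_inf[OF ninf])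
  have "ff n a \<theta> (opt_b \<theta> m)
      = \<theta> * s m + eta (1 - \<theta> * d m) + (1 - \<theta> * d m) * ln (real m) + d m * eta \<theta>"
    using ff_opt_b[OF valid th tm] opt_value_eta[OF th tm] by simp
  moreover have "\<forall>b>0. ff n a \<theta> b = (INF b\<in>{0<..}. ff n a \<theta> b) \<longrightarrow> b = opt_b \<theta> m"
    using opt_b_unique_min(2)[OF valid th tm] by simp
  ultimately show ?thesis
    unfolding Let_def m_def[symmetric] opt_b_def[symmetric]
    using ff_shape_infinite[OF ninf th] x opt_b_pos[OF th tm] opt_b_unique_min(1)[OF valid th tm]
      xb_opt_b_moment[OF valid th tm]
    by (intro conjI) blast+
qed


end

theorem lemma5:
  fixes n :: enat and a :: "nat \<Rightarrow> real" and \<theta> :: real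
  assumes n2: "2 \<le> n"
    and apos: "\<forall>i\<in>Idx n. 0 < a i"
    and amono: "\<forall>i\<in>Idx n. \<forall>j\<in>Idx n. i \<le> j \<longrightarrow> a j \<le> a i"
    and asum: "a summable_on Idx n" "infsum a (Idx n) \<le> 1"
    and eta_sum: "(\<lambda>i. eta (a i)) summable_on Idx n"
    and theta: "0 < \<theta>"
  shows
  "(n \<noteq> \<infinity> \<longrightarrow>
     (let N = the_enat n; f = ff n a \<theta>; d = dd n a; s = ss n a; m = mm n a \<theta>;
          bs = (if a N * real N \<ge> 1 / \<theta> then 0
                else s m + d m * ln ((1 - \<theta> * d m) / (\<theta> * real m)));
          mt = N - Max {k. 1 \<le> k \<and> k \<le> N - 1 \<and> a (N - k + 1) = a N}
      in (\<forall>b\<ge>0. f b > 0) \<and> convex_on {0..} f \<and>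
         (\<exists>f'. continuous_on {0..} f' \<and>
               (\<forall>b\<ge>0. (f has_real_derivative f' b) (at b within {0..}))) \<and>
         f 0 = ln (real N) \<and>
         (f has_real_derivative (\<theta> - 1 / (a N * real N))) (at 0 within {0..}) \<and>
         filterlim f at_top at_top \<and>
         bs \<ge> 0 \<and> f bs = (INF b\<in>{0..}. f b) \<and>
         (\<forall>b\<ge>0. f b = (INF b\<in>{0..}. f b) \<longrightarrow> b = bs) \<and>
         (a N * real N \<ge> 1 / \<theta> \<longrightarrow>
            bs = 0 \<and> f bs = ln (real N) \<and>
            (\<forall>i. 1 \<le> i \<and> i \<le> mt \<longrightarrow> ((\<lambda>b. xb n a b i) \<longlongrightarrow> 0) (at_right 0)) \<and>
            (\<forall>i. mt < i \<and> i \<le> N \<longrightarrow>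
               ((\<lambda>b. xb n a b i) \<longlongrightarrow> 1 / (a N * real (N - mt))) (at_right 0))) \<and>
         (a N * real N < 1 / \<theta> \<longrightarrow>
            bs = s m + d m * ln ((1 - \<theta> * d m) / (\<theta> * real m)) \<and>
            f bs = bs * \<theta> + ln (real m / (1 - d m * \<theta>)) \<and>
            (\<forall>i. 1 \<le> i \<and> i \<le> m \<longrightarrow> xb n a bs i = 0) \<and>
            (\<forall>i. m < i \<and> i \<le> N \<longrightarrow>
               xb n a bs i = 1 / bs * ln ((1 - \<theta> * d m) / (a i * \<theta> * real m))))))
   \<and>
   (n = \<infinity> \<longrightarrow>
     (let f = ff n a \<theta>; d = dd n a; s = ss n a; m = mm n a \<theta>;
          bs = s m + d m * ln ((1 - \<theta> * d m) / (\<theta> * real m))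
      in (\<forall>b>0. f b > 0) \<and> convex_on {0<..} f \<and>
         (\<exists>f'. continuous_on {0<..} f' \<and>
               (\<forall>b>0. (f has_real_derivative f' b) (at b)) \<and>
               filterlim f' at_bot (at_right 0)) \<and>
         filterlim f at_top (at_right 0) \<and>
         filterlim f at_top at_top \<and>
         bs > 0 \<and> f bs = (INF b\<in>{0<..}. f b) \<and>
         (\<forall>b>0. f b = (INF b\<in>{0<..}. f b) \<longrightarrow> b = bs) \<and>
         f bs = \<theta> * s m + eta (1 - \<theta> * d m) + (1 - \<theta> * d m) * ln (real m)
                + d m * eta \<theta> \<and>
         (\<forall>i. 1 \<le> i \<and> i \<le> m \<longrightarrow> xb n a bs i = 0) \<and>
         (\<forall>i. m < i \<longrightarrow>
            xb n a bs i = 1 / bs * ln ((1 - \<theta> * d m) / (a i * \<theta> * real m))) \<and>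
         (\<lambda>i. xb n a bs i * exp (- bs * xb n a bs i)) summable_on Idx n \<and>
         (\<lambda>i. exp (- bs * xb n a bs i)) summable_on Idx n \<and>
         infsum (\<lambda>i. xb n a bs i * exp (- bs * xb n a bs i)) (Idx n) =
           \<theta> * infsum (\<lambda>i. exp (- bs * xb n a bs i)) (Idx n)))"
proof -
  interpret decreasing_weights n a
    using assms by unfold_locales auto
  show ?thesis
    using lemma5_finite[OF theta] lemma5_infinite[OF theta] by blast
qed

end
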